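(* Let $S$ be a strongly $E^*$-unitary inverse semigroup with pure grading $\varphi:S^\times\to G$ and idempotent semilattice $E$. Then $(\{\mathcal T_c(E_g)\}_{g\in G},\{\hat\phi_g\}_{g\in G})$ is a partial action of $G$ on the generalized Boolean algebra $\mathcal T_c(E)$.
   Context: A generalized Boolean algebra is a distributive, relatively complemented lattice with least element $0$; an ideal is a subset closed under joins and under meets with arbitrary elements. A partial action of a group $G$ (identity $e$) on $\mathcal B$ is a family of ideals $\mathcal I_t$ and generalized Boolean algebra isomorphisms $\phi_t:\mathcal I_{t^{-1}}\to\mathcal I_t$ with (i) $\mathcal I_e=\mathcal B$, $\phi_e=\mathrm{id}$; (ii) $\phi_s(\mathcal I_{s^{-1}}\cap\mathcal I_t)=\mathcal I_s\cap\mathcal I_{st}$; (iii) $\phi_s\phi_t(x)=\phi_{st}(x)$ for $x\in\mathcal I_{t^{-1}}\cap\mathcal I_{(st)^{-1}}$. Tight filters: for a meet semilattice $P$ with $0$, a filter is a subset $F$, $\emptyset\ne F\ne P$, closed upwards and under meets; $F(P)$ has the topology generated by $\{F:x\in F\}$; the tight filters $T(P)$ are the closure of the ultrafilters (maximal filters); $V^P_{(x:x_1,\dots,x_n)}=\{\xi\in T(P):x\in\xi,\ x_1,\dots,x_n\notin\xi\}$, $V^P_x=V^P_{(x:)}$; these form a basis of compact open sets, and $\mathcal T_c(P)$ is the generalized Boolean algebra of compact open subsets of $T(P)$. Inverse semigroups: $S$ is an inverse semigroup with zero, $s^*$ the unique inverse of $s$, $E$ its idempotents, a meet semilattice with $x\wedge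 y=xy$ and least element $0$ ($x\le y$ iff $x=xy$); $S^\times=S\setminus\{0\}$, $E^\times=E\setminus\{0\}$. A pure grading is a map $\varphi:S^\times\to G$ to a group with $\varphi(ab)=\varphi(a)\varphi(b)$ whenever $ab\ne0$ and $\varphi^{-1}(1_G)=E^\times$; $S$ is strongly $E^*$-unitary if it has one. For $g\in G$, $E_g=\{x\in E: x\le ss^*$ for some $s$ with $\varphi(s)=g\}$ if $\varphi^{-1}(g)\ne\emptyset$, and $E_g=\{0\}$ otherwise; $E_g$ is downward closed and $E_e=E$. The map $\phi_g:E_{g^{-1}}\to E_g$, $x\mapsto sxs^*$ for any $s$ with $\varphi(s)=g$ and $x\le s^*s$, is a well-defined meet-semilattice isomorphism. Since $E_g$ is downward closed, $\mathcal T_c(E_g)$ is identified with the set of compact open subsets of $T(E)$ contained in $\bigcup_{x\in E_g}V^E_x$ (an ideal of $\mathcal T_c(E)$), via $U\mapsto\{\xi\in T(E):\xi\cap E_g\ne\emptyset,\ \xi\cap E_g\in U\}$, sending $V^{E_g}_{(x:x_1,\dots,x_n)}\mapsto V^E_{(x:x_1,\dots,x_n)}$. The isomorphism $\phi_g$ induces a homeomorphism $T(E_{g^{-1}})\to T(E_g)$, $\xi\mapsto\phi_g(\xi)$, hence a generalized Boolean algebra isomorphism $\hat\phi_g:\mathcal T_c(E_{g^{-1}})\to\mathcal T_c(E_g)$ with $\hat\phi_g(V_{(x:x_1,\dots,x_n)})=V_{(\phi_g(x):\phi_g(x_1),\dots,\phi_g(x_n))}$. *)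

theory Defs
  imports "HOL-Analysis.Analysis" "HOL-Algebra.Group"
begin

definition inverse_semigroup_zero :: "('a \<Rightarrow> 'a \<Rightarrow> 'a) \<Rightarrow> 'a \<Rightarrow> bool" where
  "inverse_semigroup_zero sm z \<longleftrightarrow>
     (\<forall>a b c. sm (sm a b) c = sm a (sm b c)) \<and>
     (\<forall>s. \<exists>!t. sm (sm s t) s = s \<and> sm (sm t s) t = t) \<and>
     (\<forall>s. sm z s = z \<and> sm s z = z)"

definition istar :: "('a \<Rightarrow> 'a \<Rightarrow> 'a) \<Rightarrow> 'a \<Rightarrow> 'a" where
  "istar sm s = (THE t. sm (sm s t) s = s \<and> sm (sm t s) t = t)"

definition idems :: "('a \<Rightarrow> 'a \<Rightarrow> 'a) \<Rightarrow> 'a set" where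
  "idems sm = {e. sm e e = e}"

definition sleq :: "('a \<Rightarrow> 'a \<Rightarrow> 'a) \<Rightarrow> 'a \<Rightarrow> 'a \<Rightarrow> bool" where
  "sleq m x y \<longleftrightarrow> x = m x y"

text \<open>Pure grading \<phi> : S minus zero \<rightarrow> G (values of \<phi> at the zero are irrelevant).\<close>
definition pure_grading ::
  "('a \<Rightarrow> 'a \<Rightarrow> 'a) \<Rightarrow> 'a \<Rightarrow> ('g, 'b) monoid_scheme \<Rightarrow> ('a \<Rightarrow> 'g) \<Rightarrow> bool" where
  "pure_grading sm z G \<phi> \<longleftrightarrow>
     (\<forall>s. s \<noteq> z \<longrightarrow> \<phi> s \<in> carrier G) \<and>
     (\<forall>a b. a \<noteq> z \<longrightarrow> b \<noteq> z \<longrightarrow> sm a b \<noteq> z \<longrightarrow> \<phi> (sm a b) = \<phi> a \<otimes>\<^bsub>G\<^esub> \<phi> b) \<and>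
     {s. s \<noteq> z \<and> \<phi> s = \<one>\<^bsub>G\<^esub>} = idems sm - {z}"

definition Eg :: "('a \<Rightarrow> 'a \<Rightarrow> 'a) \<Rightarrow> 'a \<Rightarrow> ('a \<Rightarrow> 'g) \<Rightarrow> 'g \<Rightarrow> 'a set" where
  "Eg sm z \<phi> g =
     (if (\<exists>s. s \<noteq> z \<and> \<phi> s = g)
      then {x \<in> idems sm. \<exists>s. s \<noteq> z \<and> \<phi> s = g \<and> sleq sm x (sm s (istar sm s))}
      else {z})"

text \<open>\<phi>_g : E_{g^-1} \<rightarrow> E_g, x \<mapsto> s x s* for any s with \<phi>(s) = g and x \<le> s*s.\<close>
definition phig :: "('a \<Rightarrow> 'a \<Rightarrow> 'a) \<Rightarrow> 'a \<Rightarrow> ('a \<Rightarrow> 'g) \<Rightarrow> 'g \<Rightarrow> 'a \<Rightarrow> 'a" where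
  "phig sm z \<phi> g x =
     (let s = (SOME s. s \<noteq> z \<and> \<phi> s = g \<and> sleq sm x (sm (istar sm s) s))
      in sm (sm s x) (istar sm s))"

definition is_filter :: "'a set \<Rightarrow> ('a \<Rightarrow> 'a \<Rightarrow> 'a) \<Rightarrow> 'a set \<Rightarrow> bool" where
  "is_filter P m F \<longleftrightarrow> F \<noteq> {} \<and> F \<subseteq> P \<and> F \<noteq> P \<and>
     (\<forall>x\<in>F. \<forall>y\<in>P. sleq m x y \<longrightarrow> y \<in> F) \<and>
     (\<forall>x\<in>F. \<forall>y\<in>F. m x y \<in> F)"

definition filters :: "'a set \<Rightarrow> ('a \<Rightarrow> 'a \<Rightarrow> 'a) \<Rightarrow> 'a set set" where
  "filters P m = {F. is_filter P m F}"

definition ultrafilters :: "'a set \<Rightarrow> ('a \<Rightarrow> 'a \<Rightarrow> 'a) \<Rightarrow> 'a set set" where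
  "ultrafilters P m = {F \<in> filters P m. \<forall>F' \<in> filters P m. F \<subseteq> F' \<longrightarrow> F' = F}"

definition filter_topology :: "'a set \<Rightarrow> ('a \<Rightarrow> 'a \<Rightarrow> 'a) \<Rightarrow> 'a set topology" where
  "filter_topology P m =
     subtopology
       (topology_generated_by ({{F \<in> filters P m. x \<in> F} | x. x \<in> P} \<union>
                               {{F \<in> filters P m. x \<notin> F} | x. x \<in> P}))
       (filters P m)"

definition tight_filters :: "'a set \<Rightarrow> ('a \<Rightarrow> 'a \<Rightarrow> 'a) \<Rightarrow> 'a set set" where
  "tight_filters P m = (filter_topology P m) closure_of (ultrafilters P m)"

definition tight_topology :: "'a set \<Rightarrow> ('a \<Rightarrow> 'a \<Rightarrow> 'a) \<Rightarrow> 'a set topology" where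
  "tight_topology P m = subtopology (filter_topology P m) (tight_filters P m)"

definition Tc :: "'a set \<Rightarrow> ('a \<Rightarrow> 'a \<Rightarrow> 'a) \<Rightarrow> 'a set set set" where
  "Tc P m = {U. openin (tight_topology P m) U \<and> compactin (tight_topology P m) U}"

definition hat_phig :: "('a \<Rightarrow> 'a \<Rightarrow> 'a) \<Rightarrow> 'a \<Rightarrow> ('a \<Rightarrow> 'g) \<Rightarrow> 'g \<Rightarrow> 'a set set \<Rightarrow> 'a set set" where
  "hat_phig sm z \<phi> g U = (\<lambda>\<xi>. phig sm z \<phi> g ` \<xi>) ` U"

text \<open>The identification of T_c(E_g) with an ideal of T_c(E).\<close>
definition iota :: "('a \<Rightarrow> 'a \<Rightarrow> 'a) \<Rightarrow> 'a \<Rightarrow> ('a \<Rightarrow> 'g) \<Rightarrow> 'g \<Rightarrow> 'a set set \<Rightarrow> 'a set set" where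
  "iota sm z \<phi> g U =
     {\<xi> \<in> tight_filters (idems sm) sm. \<xi> \<inter> Eg sm z \<phi> g \<noteq> {} \<and> \<xi> \<inter> Eg sm z \<phi> g \<in> U}"

definition Ig :: "('a \<Rightarrow> 'a \<Rightarrow> 'a) \<Rightarrow> 'a \<Rightarrow> ('a \<Rightarrow> 'g) \<Rightarrow> 'g \<Rightarrow> 'a set set set" where
  "Ig sm z \<phi> g = iota sm z \<phi> g ` Tc (Eg sm z \<phi> g) sm"

text \<open>\<phi>_g viewed as a map I_{g^-1} \<rightarrow> I_g inside T_c(E).\<close>
definition theta :: "('a \<Rightarrow> 'a \<Rightarrow> 'a) \<Rightarrow> 'a \<Rightarrow> ('g, 'b) monoid_scheme \<Rightarrow> ('a \<Rightarrow> 'g) \<Rightarrow> 'g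
                      \<Rightarrow> 'a set set \<Rightarrow> 'a set set" where
  "theta sm z G \<phi> g V =
     iota sm z \<phi> g (hat_phig sm z \<phi> g
        (THE U. U \<in> Tc (Eg sm z \<phi> (inv\<^bsub>G\<^esub> g)) sm \<and> iota sm z \<phi> (inv\<^bsub>G\<^esub> g) U = V))"

text \<open>B is a family of sets, with join = union, meet = intersection.\<close>
definition gba_ideal :: "'x set set \<Rightarrow> 'x set set \<Rightarrow> bool" where
  "gba_ideal B I \<longleftrightarrow> I \<subseteq> B \<and> (\<forall>a\<in>I. \<forall>b\<in>I. a \<union> b \<in> I) \<and> (\<forall>a\<in>I. \<forall>b\<in>B. a \<inter> b \<in> I)"

definition gba_iso :: "'x set set \<Rightarrow> 'x set set \<Rightarrow> ('x set \<Rightarrow> 'x set) \<Rightarrow> bool" where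
  "gba_iso I J f \<longleftrightarrow> bij_betw f I J \<and>
     (\<forall>a\<in>I. \<forall>b\<in>I. f (a \<union> b) = f a \<union> f b \<and> f (a \<inter> b) = f a \<inter> f b \<and> f (a - b) = f a - f b)"

definition partial_action ::
  "('g, 'b) monoid_scheme \<Rightarrow> 'x set set \<Rightarrow> ('g \<Rightarrow> 'x set set) \<Rightarrow> ('g \<Rightarrow> 'x set \<Rightarrow> 'x set) \<Rightarrow> bool" where
  "partial_action G B I f \<longleftrightarrow>
     (\<forall>t\<in>carrier G. gba_ideal B (I t) \<and> gba_iso (I (inv\<^bsub>G\<^esub> t)) (I t) (f t)) \<and>
     I \<one>\<^bsub>G\<^esub> = B \<and> (\<forall>x\<in>B. f \<one>\<^bsub>G\<^esub> x = x) \<and>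
     (\<forall>s\<in>carrier G. \<forall>t\<in>carrier G.
        f s ` (I (inv\<^bsub>G\<^esub> s) \<inter> I t) = I s \<inter> I (s \<otimes>\<^bsub>G\<^esub> t)) \<and>
     (\<forall>s\<in>carrier G. \<forall>t\<in>carrier G. \<forall>x \<in> I (inv\<^bsub>G\<^esub> t) \<inter> I (inv\<^bsub>G\<^esub> (s \<otimes>\<^bsub>G\<^esub> t)).
        f s (f t x) = f (s \<otimes>\<^bsub>G\<^esub> t) x)"

end

(*
  Write D_g for the set of tight filters of E that meet the order ideal E_g. Restriction to E_g
  and upward closure are mutually inverse homeomorphisms between D_g and the tight spectrum of
  E_g: they are homeomorphisms of the ambient filter spaces that match the ultrafilters, and
  tight filters form the closure of the ultrafilters. Transporting the homeomorphism of tight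
  spectra induced by the isomorphism phi_g : E_{g^-1} -> E_g gives a homeomorphism
  Phi_g : D_{g^-1} -> D_g, sending xi to the upward closure of phi_g(xi restricted to E_{g^-1}).
  Hence T_c(E_g) becomes the ideal of compact open sets contained in D_g, and hat phi_g becomes
  direct image under Phi_g. The axioms of a partial action then reduce to Phi_1 = id and
  Phi_s o Phi_t = Phi_st on the intersection of D_{t^-1} and D_{(st)^-1}. The latter follows
  from phi_s o phi_t = phi_st on the intersection of E_{t^-1} and E_{(st)^-1}, since the
  elements of a filter lying in both ideals are cofinal in it. This pointwise identity is where
  the pure grading enters: if a and b have degrees t and st, then b a^* is zero or of degree s.
*)

theory Submission
  imports Defs
begin

section \<open>Filter spaces and tight filters\<close>

lemma filters_nonempty: "F \<in> filters P m \<Longrightarrow> F \<noteq> {}"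
  and filters_subset: "F \<in> filters P m \<Longrightarrow> F \<subseteq> P"
  unfolding filters_def is_filter_def by blast+

lemma topspace_filter_topology [simp]: "topspace (filter_topology P m) = filters P m"
proof -
  let ?S = "{{F \<in> filters P m. x \<in> F} | x. x \<in> P} \<union> {{F \<in> filters P m. x \<notin> F} | x. x \<in> P}"
  have "filters P m \<subseteq> \<Union> ?S"
  proof
    fix F assume F: "F \<in> filters P m"
    then obtain x where "x \<in> F" "x \<in> P"
      using filters_nonempty filters_subset by blast
    with F show "F \<in> \<Union> ?S"
      by blast
  qed
  then show ?thesis
    unfolding filter_topology_def by auto
qed

lemma openin_filter_topology_mem: "x \<in> P \<Longrightarrow> openin (filter_topology P m) {F \<in> filters P m. x \<in> F}"
  and openin_filter_topology_not_mem: "x \<in> P \<Longrightarrow> openin (filter_topology P m) {F \<in> filters P m. x \<notin> F}"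
  unfolding filter_topology_def openin_subtopology
  by (blast intro: topology_generated_by_Basis)+

lemma continuous_map_into_filter_topology:
  assumes into: "\<And>\<xi>. \<xi> \<in> topspace X \<Longrightarrow> f \<xi> \<in> filters P m"
    and mem: "\<And>x. x \<in> P \<Longrightarrow> openin X {\<xi> \<in> topspace X. x \<in> f \<xi>}"
    and not_mem: "\<And>x. x \<in> P \<Longrightarrow> openin X {\<xi> \<in> topspace X. x \<notin> f \<xi>}"
  shows "continuous_map X (filter_topology P m) f"
proof -
  let ?S = "{{F \<in> filters P m. x \<in> F} | x. x \<in> P} \<union> {{F \<in> filters P m. x \<notin> F} | x. x \<in> P}"
  have "continuous_map X (topology_generated_by ?S) f"
  proof (rule continuous_on_generated_topo)
    fix U assume "U \<in> ?S"
    then consider x where "x \<in> P" "U = {F \<in> filters P m. x \<in> F}"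
      | x where "x \<in> P" "U = {F \<in> filters P m. x \<notin> F}"
      by blast
    then show "openin X (f -` U \<inter> topspace X)"
    proof cases
      case (1 x)
      then have "f -` U \<inter> topspace X = {\<xi> \<in> topspace X. x \<in> f \<xi>}"
        using into by auto
      then show ?thesis
        using mem[OF 1(1)] by simp
    next
      case (2 x)
      then have "f -` U \<inter> topspace X = {\<xi> \<in> topspace X. x \<notin> f \<xi>}"
        using into by auto
      then show ?thesis
        using not_mem[OF 2(1)] by simp
    qed
  next
    show "f ` topspace X \<subseteq> \<Union> ?S"
    proof
      fix F assume "F \<in> f ` topspace X"
      then have F: "F \<in> filters P m"
        using into by blast
      then obtain x where "x \<in> F" "x \<in> P"
        using filters_nonempty filters_subset by blast
      then show "F \<in> \<Union> ?S"
        using F by blast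
    qed
  qed
  then show ?thesis
    unfolding filter_topology_def continuous_map_in_subtopology using into by (simp add: Pi_iff)
qed

lemma Hausdorff_space_tight_topology: "Hausdorff_space (tight_topology P m)"
proof -
  have "Hausdorff_space (filter_topology P m)"
    unfolding Hausdorff_space_def topspace_filter_topology
  proof (intro allI impI)
    fix F F' assume FF': "F \<in> filters P m \<and> F' \<in> filters P m \<and> F \<noteq> F'"
    then obtain x where x: "x \<in> P" "x \<in> F \<longleftrightarrow> x \<notin> F'"
      using filters_subset by blast
    show "\<exists>U V. openin (filter_topology P m) U \<and> openin (filter_topology P m) V \<and> F \<in> U \<and> F' \<in> V \<and> disjnt U V"
    proof (cases "x \<in> F")
      case True
      then show ?thesis
        using x FF' openin_filter_topology_mem[OF x(1)] openin_filter_topology_not_mem[OF x(1)]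
        by (intro exI[of _ "{F \<in> filters P m. x \<in> F}"] exI[of _ "{F \<in> filters P m. x \<notin> F}"])
          (auto simp: disjnt_def)
    next
      case False
      then show ?thesis
        using x FF' openin_filter_topology_mem[OF x(1)] openin_filter_topology_not_mem[OF x(1)]
        by (intro exI[of _ "{F \<in> filters P m. x \<notin> F}"] exI[of _ "{F \<in> filters P m. x \<in> F}"])
          (auto simp: disjnt_def)
    qed
  qed
  then show ?thesis
    unfolding tight_topology_def by (rule Hausdorff_space_subtopology)
qed

lemma tight_filters_subset: "tight_filters P m \<subseteq> filters P m"
  unfolding tight_filters_def using closure_of_subset_topspace by fastforce

lemma topspace_tight_topology [simp]: "topspace (tight_topology P m) = tight_filters P m"
  unfolding tight_topology_def using tight_filters_subset by auto

lemma openin_tight_topology_Int: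
  "openin (filter_topology P m) D \<Longrightarrow> openin (tight_topology P m) (tight_filters P m \<inter> D)"
  unfolding tight_topology_def by (rule openin_subtopology_Int2)

lemma homeomorphic_maps_tight_topology:
  assumes D: "openin (filter_topology P m) D"
    and hom: "homeomorphic_maps (subtopology (filter_topology P m) D) (filter_topology P' m') f g"
    and ultra: "f ` (ultrafilters P m \<inter> D) = ultrafilters P' m'"
  shows "f ` (tight_filters P m \<inter> D) = tight_filters P' m'"
    and "homeomorphic_maps (subtopology (tight_topology P m) (tight_filters P m \<inter> D))
           (tight_topology P' m') f g"
proof -
  let ?X = "filter_topology P m"
  have D_sub: "D \<subseteq> filters P m"
    using openin_subset[OF D] by simp
  then have top_D: "topspace (subtopology ?X D) = D"
    by auto
  have "ultrafilters P m \<inter> D \<subseteq> topspace (subtopology ?X D)"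
    unfolding top_D by blast
  note closure_image = homeomorphic_map_closure_of[OF homeomorphic_maps_imp_map[OF hom] this]
  show tight: "f ` (tight_filters P m \<inter> D) = tight_filters P' m'"
    unfolding tight_filters_def ultra[symmetric] closure_image
      closure_of_subtopology_open[OF disjI1[OF D]]
    using openin_Int_closure_of_eq[OF D, of "ultrafilters P m"] by (simp add: Int_ac)
  have "f ` (D \<inter> tight_filters P m) = topspace (filter_topology P' m') \<inter> tight_filters P' m'"
    by (metis Int_commute inf.absorb2 tight tight_filters_subset topspace_filter_topology)
  then have "homeomorphic_maps (subtopology (subtopology ?X D) (tight_filters P m))
      (subtopology (filter_topology P' m') (tight_filters P' m')) f g"
    by (rule homeomorphic_maps_subtopologies[OF hom, unfolded top_D])
  then show "homeomorphic_maps (subtopology (tight_topology P m) (tight_filters P m \<inter> D))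
      (tight_topology P' m') f g"
    unfolding tight_topology_def subtopology_subtopology by (simp add: Int_ac)
qed

lemma compact_openin_homeomorphic_image:
  assumes "homeomorphic_map X Y f" "U \<subseteq> topspace X"
  shows "openin Y (f ` U) \<and> compactin Y (f ` U) \<longleftrightarrow> openin X U \<and> compactin X U"
  by (simp add: homeomorphic_map_openness[OF assms] homeomorphic_map_compactness[OF assms])

lemma compact_openin_open_subtopology:
  assumes "openin X S"
  shows "openin (subtopology X S) U \<and> compactin (subtopology X S) U \<longleftrightarrow>
    openin X U \<and> compactin X U \<and> U \<subseteq> S"
  by (auto simp: openin_open_subtopology[OF assms] compactin_subtopology)

lemma compact_openin_homeomorphic_maps:
  assumes hom: "homeomorphic_maps X Y f g"
  shows "(\<lambda>U. f ` U) ` {U. openin X U \<and> compactin X U} = {V. openin Y V \<and> compactin Y V}"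
proof
  have f: "homeomorphic_map X Y f" and g: "homeomorphic_map Y X g"
    using hom homeomorphic_maps_map by blast+
  show "(\<lambda>U. f ` U) ` {U. openin X U \<and> compactin X U} \<subseteq> {V. openin Y V \<and> compactin Y V}"
    using compact_openin_homeomorphic_image[OF f] openin_subset by blast
  show "{V. openin Y V \<and> compactin Y V} \<subseteq> (\<lambda>U. f ` U) ` {U. openin X U \<and> compactin X U}"
  proof
    fix V assume V: "V \<in> {V. openin Y V \<and> compactin Y V}"
    then have VY: "V \<subseteq> topspace Y"
      using openin_subset by blast
    then have "f ` g ` V = V"
      using hom unfolding homeomorphic_maps_def by (force simp: image_image)
    moreover have "openin X (g ` V) \<and> compactin X (g ` V)"
      using compact_openin_homeomorphic_image[OF g VY] V by blast
    ultimately show "V \<in> (\<lambda>U. f ` U) ` {U. openin X U \<and> compactin X U}"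
      by (metis (mono_tags, lifting) image_eqI mem_Collect_eq)
  qed
qed

lemma compact_openin_Diff:
  assumes X: "Hausdorff_space X" and U: "openin X U" "compactin X U" and V: "openin X V" "compactin X V"
  shows "openin X (U - V) \<and> compactin X (U - V)"
proof
  show "openin X (U - V)"
    using U(1) compactin_imp_closedin[OF X V(2)] by (rule openin_diff)
  have "U - V = (topspace X - V) \<inter> U"
    using openin_subset[OF U(1)] by blast
  moreover have "closedin X (topspace X - V)"
    using V(1) by (rule closedin_diff[OF closedin_topspace])
  ultimately show "compactin X (U - V)"
    using closed_Int_compactin U(2) by metis
qed

lemma Tc_subset: "U \<in> Tc P m \<Longrightarrow> U \<subseteq> tight_filters P m"
  unfolding Tc_def using openin_subset[of "tight_topology P m" U] by simp

lemma Tc_Un: "U \<in> Tc P m \<Longrightarrow> V \<in> Tc P m \<Longrightarrow> U \<union> V \<in> Tc P m"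
  unfolding Tc_def by (simp add: openin_Un compactin_Un)

lemma Tc_Diff: "U \<in> Tc P m \<Longrightarrow> V \<in> Tc P m \<Longrightarrow> U - V \<in> Tc P m"
  unfolding Tc_def using compact_openin_Diff[OF Hausdorff_space_tight_topology[of P m]] by simp

lemma Tc_Int: "U \<in> Tc P m \<Longrightarrow> V \<in> Tc P m \<Longrightarrow> U \<inter> V \<in> Tc P m"
  using Tc_Diff[of U P m "U - V"] Tc_Diff[of U P m V] by (simp add: Diff_Diff_Int)

section \<open>Meet semilattices with zero\<close>

definition up_closure :: "'a set \<Rightarrow> ('a \<Rightarrow> 'a \<Rightarrow> 'a) \<Rightarrow> 'a set \<Rightarrow> 'a set" where
  "up_closure P m A = {y \<in> P. \<exists>a\<in>A. sleq m a y}"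

definition down_closed :: "'a set \<Rightarrow> ('a \<Rightarrow> 'a \<Rightarrow> 'a) \<Rightarrow> 'a set \<Rightarrow> bool" where
  "down_closed P m Q \<longleftrightarrow> Q \<subseteq> P \<and> (\<forall>x\<in>Q. \<forall>y\<in>P. sleq m y x \<longrightarrow> y \<in> Q)"

definition filters_meeting :: "'a set \<Rightarrow> ('a \<Rightarrow> 'a \<Rightarrow> 'a) \<Rightarrow> 'a set \<Rightarrow> 'a set set" where
  "filters_meeting P m Q = {F \<in> filters P m. F \<inter> Q \<noteq> {}}"

lemma up_closure_mono: "A \<subseteq> B \<Longrightarrow> up_closure P m A \<subseteq> up_closure P m B"
  unfolding up_closure_def by blast

locale meet_semilattice_zero =
  fixes P :: "'a set" and m :: "'a \<Rightarrow> 'a \<Rightarrow> 'a" and zr :: 'a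
  assumes meet_closed: "x \<in> P \<Longrightarrow> y \<in> P \<Longrightarrow> m x y \<in> P"
    and meet_comm: "x \<in> P \<Longrightarrow> y \<in> P \<Longrightarrow> m x y = m y x"
    and meet_assoc: "x \<in> P \<Longrightarrow> y \<in> P \<Longrightarrow> w \<in> P \<Longrightarrow> m (m x y) w = m x (m y w)"
    and meet_idem: "x \<in> P \<Longrightarrow> m x x = x"
    and zero_in: "zr \<in> P"
    and zero_meet: "x \<in> P \<Longrightarrow> m zr x = zr"
begin

lemma sleq_refl: "x \<in> P \<Longrightarrow> sleq m x x"
  unfolding sleq_def using meet_idem by simp

lemma sleq_trans: "x \<in> P \<Longrightarrow> y \<in> P \<Longrightarrow> w \<in> P \<Longrightarrow> sleq m x y \<Longrightarrow> sleq m y w \<Longrightarrow> sleq m x w"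
  unfolding sleq_def by (metis meet_assoc)

lemma sleq_antisym: "x \<in> P \<Longrightarrow> y \<in> P \<Longrightarrow> sleq m x y \<Longrightarrow> sleq m y x \<Longrightarrow> x = y"
  unfolding sleq_def by (metis meet_comm)

lemma meet_sleq1: "x \<in> P \<Longrightarrow> y \<in> P \<Longrightarrow> sleq m (m x y) x"
  unfolding sleq_def by (metis meet_assoc meet_comm meet_idem)

lemma meet_sleq2: "x \<in> P \<Longrightarrow> y \<in> P \<Longrightarrow> sleq m (m x y) y"
  unfolding sleq_def by (metis meet_assoc meet_idem)

lemma sleq_meet: "u \<in> P \<Longrightarrow> x \<in> P \<Longrightarrow> y \<in> P \<Longrightarrow> sleq m u x \<Longrightarrow> sleq m u y \<Longrightarrow> sleq m u (m x y)"
  unfolding sleq_def by (metis meet_assoc)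

lemma zero_sleq: "x \<in> P \<Longrightarrow> sleq m zr x"
  unfolding sleq_def using zero_meet by simp

lemma sleq_zero: "x \<in> P \<Longrightarrow> sleq m x zr \<Longrightarrow> x = zr"
  using sleq_antisym zero_in zero_sleq by blast

lemma meet_sleq_mono: "a \<in> P \<Longrightarrow> b \<in> P \<Longrightarrow> c \<in> P \<Longrightarrow> sleq m a b \<Longrightarrow> sleq m (m a c) (m b c)"
  by (meson meet_closed sleq_meet sleq_trans meet_sleq1 meet_sleq2)

lemma is_filter_iff: "is_filter P m F \<longleftrightarrow> F \<noteq> {} \<and> F \<subseteq> P \<and> zr \<notin> F \<and>
     (\<forall>x\<in>F. \<forall>y\<in>P. sleq m x y \<longrightarrow> y \<in> F) \<and> (\<forall>x\<in>F. \<forall>y\<in>F. m x y \<in> F)"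
proof -
  have "zr \<notin> F" if "is_filter P m F"
    using that zero_sleq unfolding is_filter_def by blast
  then show ?thesis
    unfolding is_filter_def using zero_in by blast
qed

lemma filtersD:
  assumes "F \<in> filters P m"
  shows "F \<noteq> {}" "F \<subseteq> P" "zr \<notin> F" "x \<in> F \<Longrightarrow> y \<in> P \<Longrightarrow> sleq m x y \<Longrightarrow> y \<in> F"
    "x \<in> F \<Longrightarrow> y \<in> F \<Longrightarrow> m x y \<in> F"
  using assms unfolding filters_def is_filter_iff by blast+

lemma filtersI:
  assumes "F \<noteq> {}" "F \<subseteq> P" "zr \<notin> F" "\<And>x y. x \<in> F \<Longrightarrow> y \<in> P \<Longrightarrow> sleq m x y \<Longrightarrow> y \<in> F"
    "\<And>x y. x \<in> F \<Longrightarrow> y \<in> F \<Longrightarrow> m x y \<in> F"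
  shows "F \<in> filters P m"
  using assms unfolding filters_def is_filter_iff by blast

lemma up_closure_filter: "F \<in> filters P m \<Longrightarrow> up_closure P m F = F"
  unfolding up_closure_def using filtersD(2,4) sleq_refl by blast

lemma up_closure_image_restrict:
  assumes F: "F \<in> filters P m" and Q: "down_closed P m Q" and Q': "down_closed P m Q'"
    and e: "e \<in> F \<inter> Q'"
    and f: "monotone_on Q (sleq m) (sleq m) f" "f ` Q \<subseteq> P"
  shows "up_closure P m (f ` (F \<inter> Q \<inter> Q')) = up_closure P m (f ` (F \<inter> Q))"
proof
  show "up_closure P m (f ` (F \<inter> Q \<inter> Q')) \<subseteq> up_closure P m (f ` (F \<inter> Q))"
    by (intro up_closure_mono image_mono) blast
next
  show "up_closure P m (f ` (F \<inter> Q)) \<subseteq> up_closure P m (f ` (F \<inter> Q \<inter> Q'))"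
  proof
    fix y assume "y \<in> up_closure P m (f ` (F \<inter> Q))"
    then obtain v where y: "y \<in> P" and v: "v \<in> F" "v \<in> Q" and vy: "sleq m (f v) y"
      unfolding up_closure_def by blast
    have vP: "v \<in> P" and eP: "e \<in> P"
      using v e filtersD(2)[OF F] by auto
    have ve: "m v e \<in> F" "m v e \<in> Q" "m v e \<in> Q'"
      using filtersD(5)[OF F v(1)] e v Q Q' meet_closed[OF vP eP] meet_sleq1[OF vP eP]
        meet_sleq2[OF vP eP]
      unfolding down_closed_def by blast+
    have "sleq m (f (m v e)) (f v)"
      using f(1) ve(2) v(2) meet_sleq1[OF vP eP] by (rule monotone_onD)
    then have "sleq m (f (m v e)) y"
      using sleq_trans f(2) ve(2) v(2) y vy by blast
    then show "y \<in> up_closure P m (f ` (F \<inter> Q \<inter> Q'))"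
      unfolding up_closure_def using y ve by blast
  qed
qed

lemma up_closure_image_up_closure:
  assumes A: "A \<subseteq> Q" and Q: "down_closed P m Q"
    and f: "monotone_on Q (sleq m) (sleq m) f" "f ` Q \<subseteq> P"
  shows "up_closure P m (f ` (up_closure P m A \<inter> Q)) = up_closure P m (f ` A)"
proof
  have "A \<subseteq> up_closure P m A"
    using A Q sleq_refl unfolding up_closure_def down_closed_def by blast
  then show "up_closure P m (f ` A) \<subseteq> up_closure P m (f ` (up_closure P m A \<inter> Q))"
    using A by (intro up_closure_mono image_mono) blast
next
  show "up_closure P m (f ` (up_closure P m A \<inter> Q)) \<subseteq> up_closure P m (f ` A)"
  proof
    fix y assume "y \<in> up_closure P m (f ` (up_closure P m A \<inter> Q))"
    then obtain w a where y: "y \<in> P" and w: "w \<in> Q" and wy: "sleq m (f w) y"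
      and a: "a \<in> A" and aw: "sleq m a w"
      unfolding up_closure_def by blast
    have "sleq m (f a) (f w)"
      using f(1) A a w aw by (blast intro: monotone_onD)
    then have "sleq m (f a) y"
      using sleq_trans f(2) A a w y wy by blast
    then show "y \<in> up_closure P m (f ` A)"
      unfolding up_closure_def using y a by blast
  qed
qed

lemma filter_meets_two_downsets:
  assumes F: "F \<in> filters P m" and Q: "down_closed P m Q" and Q': "down_closed P m Q'"
    and meets: "F \<inter> Q \<noteq> {}" "F \<inter> Q' \<noteq> {}"
  shows "F \<inter> Q \<inter> Q' \<noteq> {}"
proof -
  obtain e e' where e: "e \<in> F" "e \<in> Q" and e': "e' \<in> F" "e' \<in> Q'"
    using meets by blast
  have P: "e \<in> P" "e' \<in> P"
    using e e' filtersD(2)[OF F] by auto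
  have "m e e' \<in> F" "m e e' \<in> Q" "m e e' \<in> Q'"
    using filtersD(5)[OF F e(1) e'(1)] meet_closed[OF P] meet_sleq1[OF P] meet_sleq2[OF P] e e' Q Q'
    unfolding down_closed_def by blast+
  then show ?thesis
    by blast
qed

end

locale meet_semilattice_iso =
  A: meet_semilattice_zero P m zr + B: meet_semilattice_zero P' m zr for P P' m zr +
  fixes h h' :: "'a \<Rightarrow> 'a"
  assumes h_into: "x \<in> P \<Longrightarrow> h x \<in> P'" and h'_into: "y \<in> P' \<Longrightarrow> h' y \<in> P"
    and h'_h: "x \<in> P \<Longrightarrow> h' (h x) = x" and h_h': "y \<in> P' \<Longrightarrow> h (h' y) = y"
    and h_mono: "monotone_on P (sleq m) (sleq m) h"
    and h'_mono: "monotone_on P' (sleq m) (sleq m) h'"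
begin

lemma iso_sym: "meet_semilattice_iso P' P m zr h' h"
proof (rule meet_semilattice_iso.intro[OF B.meet_semilattice_zero_axioms A.meet_semilattice_zero_axioms])
  show "meet_semilattice_iso_axioms P' P m h' h"
    using h_into h'_into h'_h h_h' h_mono h'_mono by unfold_locales
qed

lemma image_filter_up_closed:
  assumes F: "F \<in> filters P m" and x: "x \<in> h ` F" and y: "y \<in> P'" and xy: "sleq m x y"
  shows "y \<in> h ` F"
proof -
  obtain a where a: "a \<in> F" "x = h a"
    using x by blast
  have aP: "a \<in> P"
    using a(1) A.filtersD(2)[OF F] by blast
  have "sleq m (h' (h a)) (h' y)"
    using monotone_onD[OF h'_mono h_into[OF aP] y] xy a(2) by simp
  then have "h' y \<in> F"
    using A.filtersD(4)[OF F a(1) h'_into[OF y]] h'_h[OF aP] by simp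
  then show "y \<in> h ` F"
    using h_h'[OF y] by (metis image_eqI)
qed

lemma image_filter:
  assumes F: "F \<in> filters P m"
  shows "h ` F \<in> filters P' m"
proof (rule B.filtersI)
  have FP: "F \<subseteq> P"
    using A.filtersD(2)[OF F] .
  show "h ` F \<noteq> {}"
    using A.filtersD(1)[OF F] by blast
  show "h ` F \<subseteq> P'"
    using FP h_into by blast
  show "y \<in> h ` F" if "x \<in> h ` F" "y \<in> P'" "sleq m x y" for x y
    using image_filter_up_closed[OF F that] .
  show "m x y \<in> h ` F" if xy: "x \<in> h ` F" "y \<in> h ` F" for x y
  proof -
    obtain a b where ab: "a \<in> F" "b \<in> F" "x = h a" "y = h b"
      using xy by blast
    have P_ab: "a \<in> P" "b \<in> P"
      using ab FP by auto
    have "sleq m (h (m a b)) x" "sleq m (h (m a b)) y"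
      using monotone_onD[OF h_mono A.meet_closed[OF P_ab] P_ab(1) A.meet_sleq1[OF P_ab]]
        monotone_onD[OF h_mono A.meet_closed[OF P_ab] P_ab(2) A.meet_sleq2[OF P_ab]] ab(3,4)
      by simp_all
    then have "sleq m (h (m a b)) (m x y)"
      using B.sleq_meet h_into A.meet_closed P_ab ab(3,4) by simp
    moreover have "h (m a b) \<in> h ` F"
      using A.filtersD(5)[OF F ab(1,2)] by (rule imageI)
    ultimately show "m x y \<in> h ` F"
      using image_filter_up_closed[OF F] B.meet_closed h_into P_ab ab(3,4) by simp
  qed
  show "zr \<notin> h ` F"
  proof
    assume "zr \<in> h ` F"
    then obtain a where a: "a \<in> F" "h a = zr"
      by blast
    have aP: "a \<in> P"
      using a(1) FP by blast
    have "sleq m (h' (h a)) (h' (h zr))"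
      using monotone_onD[OF h'_mono B.zero_in h_into[OF A.zero_in]] a(2)
        B.zero_sleq[OF h_into[OF A.zero_in]] by simp
    then have "zr \<in> F"
      using A.filtersD(4)[OF F a(1) A.zero_in] h'_h[OF aP] h'_h[OF A.zero_in] by simp
    then show False
      using A.filtersD(3)[OF F] by blast
  qed
qed

lemma image_inverse: "F \<subseteq> P \<Longrightarrow> h' ` h ` F = F"
  using h'_h by (force simp: image_image)

lemma mem_image_iff: "F \<subseteq> P \<Longrightarrow> y \<in> P' \<Longrightarrow> y \<in> h ` F \<longleftrightarrow> h' y \<in> F"
  using h'_h h_h' by force

lemma image_ultrafilter:
  assumes U: "U \<in> ultrafilters P m"
  shows "h ` U \<in> ultrafilters P' m"
proof -
  have U_filter: "U \<in> filters P m"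
    using U unfolding ultrafilters_def by blast
  have "F' = h ` U" if F': "F' \<in> filters P' m" and sub: "h ` U \<subseteq> F'" for F'
  proof -
    have "h' ` F' \<in> filters P m"
      using meet_semilattice_iso.image_filter[OF iso_sym F'] .
    moreover have "U \<subseteq> h' ` F'"
      using sub image_inverse[OF A.filtersD(2)[OF U_filter]] by blast
    ultimately have "h' ` F' = U"
      using U unfolding ultrafilters_def by blast
    then show "F' = h ` U"
      using meet_semilattice_iso.image_inverse[OF iso_sym B.filtersD(2)[OF F']] by blast
  qed
  then show ?thesis
    using image_filter[OF U_filter] unfolding ultrafilters_def by blast
qed

lemma image_ultrafilters: "(\<lambda>F. h ` F) ` ultrafilters P m = ultrafilters P' m"
proof
  show "(\<lambda>F. h ` F) ` ultrafilters P m \<subseteq> ultrafilters P' m"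
    using image_ultrafilter by blast
  show "ultrafilters P' m \<subseteq> (\<lambda>F. h ` F) ` ultrafilters P m"
  proof
    fix U' assume U': "U' \<in> ultrafilters P' m"
    then have "h' ` U' \<in> ultrafilters P m"
      by (rule meet_semilattice_iso.image_ultrafilter[OF iso_sym])
    moreover have "U' \<subseteq> P'"
      using U' B.filtersD(2) unfolding ultrafilters_def by blast
    then have "h ` h' ` U' = U'"
      by (rule meet_semilattice_iso.image_inverse[OF iso_sym])
    ultimately show "U' \<in> (\<lambda>F. h ` F) ` ultrafilters P m"
      by (metis image_eqI)
  qed
qed

lemma continuous_map_image: "continuous_map (filter_topology P m) (filter_topology P' m) (\<lambda>F. h ` F)"
proof (rule continuous_map_into_filter_topology)
  show "h ` F \<in> filters P' m" if "F \<in> topspace (filter_topology P m)" for F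
    using image_filter that by simp
  fix x assume x: "x \<in> P'"
  have "{F \<in> topspace (filter_topology P m). x \<in> h ` F} = {F \<in> filters P m. h' x \<in> F}"
    and "{F \<in> topspace (filter_topology P m). x \<notin> h ` F} = {F \<in> filters P m. h' x \<notin> F}"
    using mem_image_iff[OF A.filtersD(2) x] by auto
  then show "openin (filter_topology P m) {F \<in> topspace (filter_topology P m). x \<in> h ` F}"
    and "openin (filter_topology P m) {F \<in> topspace (filter_topology P m). x \<notin> h ` F}"
    using openin_filter_topology_mem openin_filter_topology_not_mem h'_into[OF x] by simp_all
qed

lemma homeomorphic_maps_image_tight_topology:
  "homeomorphic_maps (tight_topology P m) (tight_topology P' m) (\<lambda>F. h ` F) (\<lambda>F. h' ` F)"
proof -
  have "homeomorphic_maps (filter_topology P m) (filter_topology P' m) (\<lambda>F. h ` F) (\<lambda>F. h' ` F)"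
    unfolding homeomorphic_maps_def
    using continuous_map_image meet_semilattice_iso.continuous_map_image[OF iso_sym]
      image_inverse[OF A.filtersD(2)] meet_semilattice_iso.image_inverse[OF iso_sym B.filtersD(2)]
    by simp
  moreover have "subtopology (filter_topology P m) (filters P m) = filter_topology P m"
    by (metis subtopology_topspace topspace_filter_topology)
  moreover have "ultrafilters P m \<inter> filters P m = ultrafilters P m"
    unfolding ultrafilters_def by blast
  ultimately have "homeomorphic_maps (subtopology (tight_topology P m) (tight_filters P m \<inter> filters P m))
      (tight_topology P' m) (\<lambda>F. h ` F) (\<lambda>F. h' ` F)"
    using homeomorphic_maps_tight_topology(2)[OF openin_topspace[of "filter_topology P m"]]
      image_ultrafilters by simp
  moreover have "subtopology (tight_topology P m) (tight_filters P m \<inter> filters P m) = tight_topology P m"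
    using tight_filters_subset[of P m]
    by (metis Int_absorb2 subtopology_topspace topspace_tight_topology)
  ultimately show ?thesis
    by simp
qed

lemma image_tight_filter: "F \<in> tight_filters P m \<Longrightarrow> h ` F \<in> tight_filters P' m"
  using continuous_map_image_subset_topspace[OF
      homeomorphic_maps_map[THEN iffD1, OF homeomorphic_maps_image_tight_topology, THEN conjunct1,
        THEN homeomorphic_imp_continuous_map]]
  by auto

end

locale meet_semilattice_downset = meet_semilattice_zero +
  fixes Q :: "'a set"
  assumes downset: "down_closed P m Q" and zero_in_downset: "zr \<in> Q"
begin

lemma downset_subset: "Q \<subseteq> P"
  and downsetD: "x \<in> Q \<Longrightarrow> y \<in> P \<Longrightarrow> sleq m y x \<Longrightarrow> y \<in> Q"
  using downset unfolding down_closed_def by blast+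

lemma meet_in_downset: "x \<in> P \<Longrightarrow> e \<in> Q \<Longrightarrow> m x e \<in> Q"
  using downsetD meet_closed meet_sleq2 downset_subset by blast

sublocale Q: meet_semilattice_zero Q m zr
proof
  fix x y w assume x: "x \<in> Q" and y: "y \<in> Q"
  then show "m x y \<in> Q"
    using meet_in_downset downset_subset by blast
  show "m x y = m y x"
    using meet_comm downset_subset x y by blast
  assume "w \<in> Q"
  then show "m (m x y) w = m x (m y w)"
    using meet_assoc downset_subset x y by blast
next
  fix x assume "x \<in> Q"
  then show "m x x = x" "m zr x = zr"
    using meet_idem zero_meet downset_subset by blast+
qed (rule zero_in_downset)

lemma downset_meet_semilattice: "meet_semilattice_zero Q m zr"
  by (rule Q.meet_semilattice_zero_axioms)

lemma restrict_filter:
  assumes F: "F \<in> filters P m" and ne: "F \<inter> Q \<noteq> {}"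
  shows "F \<inter> Q \<in> filters Q m" "up_closure P m (F \<inter> Q) = F"
proof -
  show "F \<inter> Q \<in> filters Q m"
  proof (rule Q.filtersI)
    show "F \<inter> Q \<noteq> {}" "F \<inter> Q \<subseteq> Q" "zr \<notin> F \<inter> Q"
      using ne filtersD(3)[OF F] by blast+
    fix x y
    show "x \<in> F \<inter> Q \<Longrightarrow> y \<in> Q \<Longrightarrow> sleq m x y \<Longrightarrow> y \<in> F \<inter> Q"
      using filtersD(4)[OF F] downset_subset by blast
    show "x \<in> F \<inter> Q \<Longrightarrow> y \<in> F \<inter> Q \<Longrightarrow> m x y \<in> F \<inter> Q"
      using filtersD(5)[OF F] Q.meet_closed by blast
  qed
  obtain e where e: "e \<in> F" "e \<in> Q"
    using ne by blast
  have "y \<in> up_closure P m (F \<inter> Q)" if y: "y \<in> F" for y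
  proof -
    have yP: "y \<in> P"
      using y filtersD(2)[OF F] by blast
    have "m y e \<in> F \<inter> Q"
      using filtersD(5)[OF F y e(1)] meet_in_downset[OF yP e(2)] by blast
    moreover have "sleq m (m y e) y"
      using meet_sleq1 yP e downset_subset by blast
    ultimately show ?thesis
      using yP unfolding up_closure_def by blast
  qed
  then show "up_closure P m (F \<inter> Q) = F"
    using filtersD(4)[OF F] unfolding up_closure_def by blast
qed

lemma up_closure_filter_downset:
  assumes \<eta>: "\<eta> \<in> filters Q m"
  shows "up_closure P m \<eta> \<in> filters P m" "up_closure P m \<eta> \<inter> Q = \<eta>"
proof -
  have \<eta>_P: "\<eta> \<subseteq> P"
    using Q.filtersD(2)[OF \<eta>] downset_subset by blast
  show "up_closure P m \<eta> \<in> filters P m"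
  proof (rule filtersI)
    show "up_closure P m \<eta> \<noteq> {}"
      using Q.filtersD(1)[OF \<eta>] \<eta>_P sleq_refl unfolding up_closure_def by blast
    show "up_closure P m \<eta> \<subseteq> P"
      unfolding up_closure_def by blast
    show "zr \<notin> up_closure P m \<eta>"
      using sleq_zero \<eta>_P Q.filtersD(3)[OF \<eta>] unfolding up_closure_def by blast
    fix x y assume x: "x \<in> up_closure P m \<eta>"
    then obtain a where a: "a \<in> \<eta>" "sleq m a x" "x \<in> P"
      unfolding up_closure_def by blast
    show "y \<in> up_closure P m \<eta>" if "y \<in> P" "sleq m x y"
      using that a sleq_trans \<eta>_P unfolding up_closure_def by blast
    show "m x y \<in> up_closure P m \<eta>" if y: "y \<in> up_closure P m \<eta>"
    proof -
      obtain b where b: "b \<in> \<eta>" "sleq m b y" "y \<in> P"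
        using y unfolding up_closure_def by blast
      have "sleq m (m a b) (m x y)"
        using a b \<eta>_P by (meson meet_closed sleq_meet sleq_trans meet_sleq1 meet_sleq2 subsetD)
      then show ?thesis
        using Q.filtersD(5)[OF \<eta> a(1) b(1)] meet_closed a b unfolding up_closure_def by blast
    qed
  qed
  show "up_closure P m \<eta> \<inter> Q = \<eta>"
    using Q.filtersD(2,4)[OF \<eta>] \<eta>_P sleq_refl unfolding up_closure_def by blast
qed

lemma restrict_ultrafilter:
  assumes U: "U \<in> ultrafilters P m" and ne: "U \<inter> Q \<noteq> {}"
  shows "U \<inter> Q \<in> ultrafilters Q m"
proof -
  have U_filter: "U \<in> filters P m"
    using U unfolding ultrafilters_def by blast
  have "U = up_closure P m \<eta>" if \<eta>: "\<eta> \<in> filters Q m" "U \<inter> Q \<subseteq> \<eta>" for \<eta>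
  proof -
    have "U \<subseteq> up_closure P m \<eta>"
      using restrict_filter(2)[OF U_filter ne] up_closure_mono[OF \<eta>(2)] by blast
    then show ?thesis
      using U up_closure_filter_downset(1)[OF \<eta>(1)] unfolding ultrafilters_def by blast
  qed
  then show ?thesis
    using restrict_filter(1)[OF U_filter ne] up_closure_filter_downset(2)
    unfolding ultrafilters_def by fastforce
qed

lemma up_closure_ultrafilter:
  assumes \<eta>: "\<eta> \<in> ultrafilters Q m"
  shows "up_closure P m \<eta> \<in> ultrafilters P m \<inter> filters_meeting P m Q"
proof -
  have \<eta>_filter: "\<eta> \<in> filters Q m"
    using \<eta> unfolding ultrafilters_def by blast
  have "F = up_closure P m \<eta>" if F: "F \<in> filters P m" "up_closure P m \<eta> \<subseteq> F" for F
  proof -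
    have sub: "\<eta> \<subseteq> F \<inter> Q"
      using F(2) up_closure_filter_downset(2)[OF \<eta>_filter] by blast
    then have ne: "F \<inter> Q \<noteq> {}"
      using Q.filtersD(1)[OF \<eta>_filter] by blast
    then have "F \<inter> Q = \<eta>"
      using \<eta> restrict_filter(1)[OF F(1)] sub unfolding ultrafilters_def by blast
    then show ?thesis
      using restrict_filter(2)[OF F(1) ne] by simp
  qed
  then show ?thesis
    using up_closure_filter_downset[OF \<eta>_filter] Q.filtersD(1)[OF \<eta>_filter]
    unfolding ultrafilters_def filters_meeting_def by auto
qed

lemma restrict_ultrafilters:
  "(\<lambda>F. F \<inter> Q) ` (ultrafilters P m \<inter> filters_meeting P m Q) = ultrafilters Q m"
proof
  show "(\<lambda>F. F \<inter> Q) ` (ultrafilters P m \<inter> filters_meeting P m Q) \<subseteq> ultrafilters Q m"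
    using restrict_ultrafilter unfolding filters_meeting_def by blast
  show "ultrafilters Q m \<subseteq> (\<lambda>F. F \<inter> Q) ` (ultrafilters P m \<inter> filters_meeting P m Q)"
  proof
    fix \<eta> assume \<eta>: "\<eta> \<in> ultrafilters Q m"
    then have "up_closure P m \<eta> \<inter> Q = \<eta>"
      using up_closure_filter_downset(2) unfolding ultrafilters_def by blast
    then show "\<eta> \<in> (\<lambda>F. F \<inter> Q) ` (ultrafilters P m \<inter> filters_meeting P m Q)"
      using up_closure_ultrafilter[OF \<eta>] by (metis image_eqI)
  qed
qed

lemma mem_up_closure_iff:
  assumes \<eta>: "\<eta> \<in> filters Q m" and x: "x \<in> P" and e: "e \<in> \<eta>"
  shows "x \<in> up_closure P m \<eta> \<longleftrightarrow> m x e \<in> \<eta>"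
proof -
  have eQ: "e \<in> Q"
    using e Q.filtersD(2)[OF \<eta>] by blast
  then have eP: "e \<in> P"
    using downset_subset by blast
  have "m x e \<in> \<eta>" if a: "a \<in> \<eta>" "sleq m a x" for a
  proof -
    have aQ: "a \<in> Q"
      using a(1) Q.filtersD(2)[OF \<eta>] by blast
    then have "sleq m (m a e) (m x e)"
      using meet_sleq_mono[OF _ x eP a(2)] downset_subset by blast
    then show ?thesis
      using Q.filtersD(4)[OF \<eta> Q.filtersD(5)[OF \<eta> a(1) e] meet_in_downset[OF x eQ]] by simp
  qed
  moreover have "sleq m (m x e) x"
    using meet_sleq1[OF x eP] .
  ultimately show ?thesis
    using x unfolding up_closure_def by blast
qed

lemma openin_filters_meeting: "openin (filter_topology P m) (filters_meeting P m Q)"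
proof -
  have "filters_meeting P m Q = (\<Union>e\<in>Q. {F \<in> filters P m. e \<in> F})"
    unfolding filters_meeting_def by blast
  moreover have "openin (filter_topology P m) (\<Union>e\<in>Q. {F \<in> filters P m. e \<in> F})"
    using downset_subset by (intro openin_Union) (auto intro!: openin_filter_topology_mem)
  ultimately show ?thesis
    by simp
qed

lemma continuous_map_restrict:
  "continuous_map (subtopology (filter_topology P m) (filters_meeting P m Q)) (filter_topology Q m)
     (\<lambda>F. F \<inter> Q)"
proof (rule continuous_map_into_filter_topology)
  let ?X = "subtopology (filter_topology P m) (filters_meeting P m Q)"
  have top: "topspace ?X = filters_meeting P m Q"
    unfolding filters_meeting_def by auto
  show "F \<inter> Q \<in> filters Q m" if "F \<in> topspace ?X" for F
  proof -
    have "F \<in> filters_meeting P m Q"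
      using that top by simp
    then show ?thesis
      using restrict_filter(1) unfolding filters_meeting_def by blast
  qed
  fix x assume x: "x \<in> Q"
  then have xP: "x \<in> P"
    using downset_subset by blast
  have "{F \<in> topspace ?X. x \<in> F \<inter> Q} = filters_meeting P m Q \<inter> {F \<in> filters P m. x \<in> F}"
    and "{F \<in> topspace ?X. x \<notin> F \<inter> Q} = filters_meeting P m Q \<inter> {F \<in> filters P m. x \<notin> F}"
    unfolding top using x by (auto simp: filters_meeting_def)
  then show "openin ?X {F \<in> topspace ?X. x \<in> F \<inter> Q}" "openin ?X {F \<in> topspace ?X. x \<notin> F \<inter> Q}"
    using openin_subtopology_Int2[OF openin_filter_topology_mem[OF xP]]
      openin_subtopology_Int2[OF openin_filter_topology_not_mem[OF xP]] by simp_all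
qed

lemma continuous_map_up_closure:
  "continuous_map (filter_topology Q m) (filter_topology P m) (up_closure P m)"
proof (rule continuous_map_into_filter_topology)
  show "up_closure P m \<eta> \<in> filters P m" if "\<eta> \<in> topspace (filter_topology Q m)" for \<eta>
    using up_closure_filter_downset(1) that by simp
  fix x assume x: "x \<in> P"
  have split: "{\<eta> \<in> filters Q m. x \<in> up_closure P m \<eta> \<longleftrightarrow> b} =
      (\<Union>e\<in>Q. {\<eta> \<in> filters Q m. e \<in> \<eta>} \<inter> {\<eta> \<in> filters Q m. m x e \<in> \<eta> \<longleftrightarrow> b})" for b
  proof (intro equalityI subsetI)
    fix \<eta> assume "\<eta> \<in> {\<eta> \<in> filters Q m. x \<in> up_closure P m \<eta> \<longleftrightarrow> b}"
    then have \<eta>: "\<eta> \<in> filters Q m" "x \<in> up_closure P m \<eta> \<longleftrightarrow> b"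
      by auto
    obtain e where "e \<in> \<eta>"
      using Q.filtersD(1)[OF \<eta>(1)] by blast
    then show "\<eta> \<in> (\<Union>e\<in>Q. {\<eta> \<in> filters Q m. e \<in> \<eta>} \<inter> {\<eta> \<in> filters Q m. m x e \<in> \<eta> \<longleftrightarrow> b})"
      using mem_up_closure_iff[OF \<eta>(1) x] \<eta> Q.filtersD(2)[OF \<eta>(1)] by blast
  next
    fix \<eta> assume "\<eta> \<in> (\<Union>e\<in>Q. {\<eta> \<in> filters Q m. e \<in> \<eta>} \<inter> {\<eta> \<in> filters Q m. m x e \<in> \<eta> \<longleftrightarrow> b})"
    then obtain e where "\<eta> \<in> filters Q m" "e \<in> \<eta>" "m x e \<in> \<eta> \<longleftrightarrow> b"
      by blast
    then show "\<eta> \<in> {\<eta> \<in> filters Q m. x \<in> up_closure P m \<eta> \<longleftrightarrow> b}"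
      using mem_up_closure_iff[OF _ x] by blast
  qed
  have "openin (filter_topology Q m) {\<eta> \<in> filters Q m. x \<in> up_closure P m \<eta> \<longleftrightarrow> b}" for b
    unfolding split
  proof (intro openin_Union ballI, clarify)
    fix e assume e: "e \<in> Q"
    have "openin (filter_topology Q m) {\<eta> \<in> filters Q m. m x e \<in> \<eta> \<longleftrightarrow> b}"
      using openin_filter_topology_mem[OF meet_in_downset[OF x e]]
        openin_filter_topology_not_mem[OF meet_in_downset[OF x e]] by (cases b) simp_all
    then show "openin (filter_topology Q m)
        ({\<eta> \<in> filters Q m. e \<in> \<eta>} \<inter> {\<eta> \<in> filters Q m. m x e \<in> \<eta> \<longleftrightarrow> b})"
      using openin_filter_topology_mem[OF e] by (rule openin_Int[rotated])
  qed
  from this[of True] this[of False]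
  show "openin (filter_topology Q m) {\<eta> \<in> topspace (filter_topology Q m). x \<in> up_closure P m \<eta>}"
    and "openin (filter_topology Q m) {\<eta> \<in> topspace (filter_topology Q m). x \<notin> up_closure P m \<eta>}"
    by simp_all
qed

lemma homeomorphic_maps_restrict_tight_topology:
  "homeomorphic_maps
     (subtopology (tight_topology P m) (tight_filters P m \<inter> filters_meeting P m Q))
     (tight_topology Q m) (\<lambda>F. F \<inter> Q) (up_closure P m)"
proof -
  have top: "topspace (subtopology (filter_topology P m) (filters_meeting P m Q)) = filters_meeting P m Q"
    unfolding filters_meeting_def by auto
  have "homeomorphic_maps (subtopology (filter_topology P m) (filters_meeting P m Q))
      (filter_topology Q m) (\<lambda>F. F \<inter> Q) (up_closure P m)"
    unfolding homeomorphic_maps_def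
  proof (intro conjI ballI continuous_map_restrict)
    show "continuous_map (filter_topology Q m)
        (subtopology (filter_topology P m) (filters_meeting P m Q)) (up_closure P m)"
      unfolding continuous_map_in_subtopology filters_meeting_def
      using continuous_map_up_closure up_closure_filter_downset Q.filtersD(1) by auto
    show "up_closure P m (F \<inter> Q) = F"
      if "F \<in> topspace (subtopology (filter_topology P m) (filters_meeting P m Q))" for F
      using restrict_filter(2) that top unfolding filters_meeting_def by simp
    show "up_closure P m \<eta> \<inter> Q = \<eta>" if "\<eta> \<in> topspace (filter_topology Q m)" for \<eta>
      using up_closure_filter_downset(2) that by simp
  qed
  then show ?thesis
    by (rule homeomorphic_maps_tight_topology(2)[OF openin_filters_meeting _ restrict_ultrafilters])
qed

end

section \<open>Inverse semigroups with a pure grading\<close>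

locale inverse_semigroup =
  fixes sm :: "'a \<Rightarrow> 'a \<Rightarrow> 'a" (infixl "\<cdot>" 70) and z :: 'a
  assumes is_inverse_semigroup: "inverse_semigroup_zero sm z"
begin

abbreviation star :: "'a \<Rightarrow> 'a" where "star a \<equiv> istar sm a"

lemma mult_assoc [simp]: "(a \<cdot> b) \<cdot> c = a \<cdot> (b \<cdot> c)"
  using is_inverse_semigroup unfolding inverse_semigroup_zero_def by blast

lemma star_ex1: "\<exists>!t. a \<cdot> t \<cdot> a = a \<and> t \<cdot> a \<cdot> t = t"
  using is_inverse_semigroup unfolding inverse_semigroup_zero_def by blast

lemma zero_mult [simp]: "z \<cdot> a = z" and mult_zero [simp]: "a \<cdot> z = z"
  using is_inverse_semigroup unfolding inverse_semigroup_zero_def by blast+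

lemma star_props: "a \<cdot> star a \<cdot> a = a \<and> star a \<cdot> a \<cdot> star a = star a"
  unfolding istar_def by (rule theI'[OF star_ex1])

lemma mult_star_mult [simp]: "a \<cdot> (star a \<cdot> a) = a"
  and star_mult_star [simp]: "star a \<cdot> (a \<cdot> star a) = star a"
  using star_props by simp_all

lemma mult_star_mult_left [simp]: "a \<cdot> (star a \<cdot> (a \<cdot> w)) = a \<cdot> w"
  and star_mult_star_left [simp]: "star a \<cdot> (a \<cdot> (star a \<cdot> w)) = star a \<cdot> w"
  by (metis mult_assoc mult_star_mult, metis mult_assoc star_mult_star)

lemma star_unique: "a \<cdot> t \<cdot> a = a \<Longrightarrow> t \<cdot> a \<cdot> t = t \<Longrightarrow> t = star a"
  unfolding istar_def by (rule the1_equality[OF star_ex1, symmetric]) blast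

lemma star_star [simp]: "star (star a) = a"
  by (rule star_unique[symmetric]) simp_all

lemma star_idem: "e \<cdot> e = e \<Longrightarrow> star e = e"
  by (rule star_unique[symmetric]) simp_all

lemma mult_absorb: "x \<cdot> e = x \<Longrightarrow> x \<cdot> (e \<cdot> w) = x \<cdot> w"
  by (metis mult_assoc)

text \<open>With \<open>a = (e f)\<^sup>*\<close>, the element \<open>f a e\<close> is also an inverse of \<open>e f\<close>, so it equals \<open>a\<close>;
  this makes \<open>a\<close>, hence \<open>e f\<close>, idempotent.\<close>

lemma idem_mult_idem:
  assumes e: "e \<cdot> e = e" and f: "f \<cdot> f = f"
  shows "(e \<cdot> f) \<cdot> (e \<cdot> f) = e \<cdot> f"
proof -
  define a where "a = star (e \<cdot> f)"
  have a1: "e \<cdot> (f \<cdot> (a \<cdot> (e \<cdot> f))) = e \<cdot> f"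
    unfolding a_def using mult_star_mult[of "e \<cdot> f"] by (simp only: mult_assoc)
  have a2: "a \<cdot> (e \<cdot> (f \<cdot> a)) = a"
    unfolding a_def using star_mult_star[of "e \<cdot> f"] by (simp only: mult_assoc)
  have "f \<cdot> a \<cdot> e = star (e \<cdot> f)"
  proof (rule star_unique)
    have "e \<cdot> f \<cdot> (f \<cdot> a \<cdot> e) \<cdot> (e \<cdot> f) = e \<cdot> (f \<cdot> f) \<cdot> a \<cdot> (e \<cdot> e) \<cdot> f"
      by simp
    also have "\<dots> = e \<cdot> f"
      using e f a1 by simp
    finally show "e \<cdot> f \<cdot> (f \<cdot> a \<cdot> e) \<cdot> (e \<cdot> f) = e \<cdot> f" .
    have "f \<cdot> a \<cdot> e \<cdot> (e \<cdot> f) \<cdot> (f \<cdot> a \<cdot> e) = f \<cdot> (a \<cdot> (e \<cdot> e) \<cdot> (f \<cdot> f) \<cdot> a) \<cdot> e"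
      by simp
    also have "\<dots> = f \<cdot> a \<cdot> e"
      using e f a2 by simp
    finally show "f \<cdot> a \<cdot> e \<cdot> (e \<cdot> f) \<cdot> (f \<cdot> a \<cdot> e) = f \<cdot> a \<cdot> e" .
  qed
  then have fae: "f \<cdot> a \<cdot> e = a"
    unfolding a_def by simp
  have "a \<cdot> a = f \<cdot> (a \<cdot> (e \<cdot> (f \<cdot> a))) \<cdot> e"
    by (subst (1 2) fae[symmetric]) simp
  also have "\<dots> = a"
    using a2 fae by simp
  finally have "a \<cdot> a = a" .
  moreover have "e \<cdot> f = a"
    using star_idem[OF \<open>a \<cdot> a = a\<close>] unfolding a_def by simp
  ultimately show ?thesis
    by simp
qed

lemma idem_commute:
  assumes e: "e \<cdot> e = e" and f: "f \<cdot> f = f"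
  shows "e \<cdot> f = f \<cdot> e"
proof -
  have ef: "(e \<cdot> f) \<cdot> (e \<cdot> f) = e \<cdot> f" and fe: "(f \<cdot> e) \<cdot> (f \<cdot> e) = f \<cdot> e"
    using idem_mult_idem e f by blast+
  have "f \<cdot> e = star (e \<cdot> f)"
  proof (rule star_unique)
    show "e \<cdot> f \<cdot> (f \<cdot> e) \<cdot> (e \<cdot> f) = e \<cdot> f"
      using e f ef by (simp add: mult_absorb)
    show "f \<cdot> e \<cdot> (e \<cdot> f) \<cdot> (f \<cdot> e) = f \<cdot> e"
      using e f fe by (simp add: mult_absorb)
  qed
  then show ?thesis
    using star_idem[OF ef] by simp
qed

lemma star_mult: "star (a \<cdot> b) = star b \<cdot> star a"
proof (rule star_unique[symmetric])
  have c: "(b \<cdot> star b) \<cdot> (star a \<cdot> a) = (star a \<cdot> a) \<cdot> (b \<cdot> star b)"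
    by (rule idem_commute) simp_all
  have "a \<cdot> b \<cdot> (star b \<cdot> star a) \<cdot> (a \<cdot> b) = a \<cdot> ((b \<cdot> star b) \<cdot> (star a \<cdot> a)) \<cdot> b" by simp
  also have "\<dots> = a \<cdot> ((star a \<cdot> a) \<cdot> (b \<cdot> star b)) \<cdot> b" using c by simp
  also have "\<dots> = a \<cdot> b" by simp
  finally show "a \<cdot> b \<cdot> (star b \<cdot> star a) \<cdot> (a \<cdot> b) = a \<cdot> b" .
  have "star b \<cdot> star a \<cdot> (a \<cdot> b) \<cdot> (star b \<cdot> star a) = star b \<cdot> ((star a \<cdot> a) \<cdot> (b \<cdot> star b)) \<cdot> star a" by simp
  also have "\<dots> = star b \<cdot> ((b \<cdot> star b) \<cdot> (star a \<cdot> a)) \<cdot> star a" using c by simp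
  also have "\<dots> = star b \<cdot> star a" by simp
  finally show "star b \<cdot> star a \<cdot> (a \<cdot> b) \<cdot> (star b \<cdot> star a) = star b \<cdot> star a" .
qed

abbreviation E where "E \<equiv> idems sm"

lemma idems_iff: "x \<in> E \<longleftrightarrow> x \<cdot> x = x"
  unfolding idems_def by simp

lemma zero_in_idems: "z \<in> E"
  by (simp add: idems_iff)

lemma idems_meet_semilattice: "meet_semilattice_zero E sm z"
proof
  fix x y w assume x: "x \<in> E" and y: "y \<in> E"
  show "x \<cdot> y \<in> E"
    using idem_mult_idem x y idems_iff by blast
  show "x \<cdot> y = y \<cdot> x"
    using idem_commute x y idems_iff by blast
  show "x \<cdot> y \<cdot> w = x \<cdot> (y \<cdot> w)"
    by simp
next
  fix x assume "x \<in> E"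
  then show "x \<cdot> x = x" "z \<cdot> x = z"
    using idems_iff by auto
qed (rule zero_in_idems)

lemma star_idems: "x \<in> E \<Longrightarrow> star x = x"
  using star_idem idems_iff by blast

lemma idem_below_star_mult:
  assumes x: "x \<in> E" and xa: "x \<cdot> (star a \<cdot> a) = x"
  shows "star a \<cdot> (a \<cdot> x) = x"
proof -
  have "(star a \<cdot> a) \<cdot> x = x \<cdot> (star a \<cdot> a)"
    using x by (intro idem_commute) (simp_all add: idems_iff)
  then show ?thesis
    using xa by simp
qed

lemma star_nonzero: "a \<noteq> z \<Longrightarrow> star a \<noteq> z"
  by (metis mult_star_mult zero_mult mult_zero)

lemma mult_star_nonzero: "a \<noteq> z \<Longrightarrow> a \<cdot> star a \<noteq> z"
  by (metis mult_star_mult mult_assoc zero_mult)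

end

locale graded_inverse_semigroup = inverse_semigroup +
  fixes G :: "('g, 'b) monoid_scheme" and \<phi> :: "'a \<Rightarrow> 'g"
  assumes group_G: "group G" and grading: "pure_grading sm z G \<phi>"
begin

sublocale G: group G
  by (rule group_G)

abbreviation EG :: "'g \<Rightarrow> 'a set" where "EG g \<equiv> Eg sm z \<phi> g"
abbreviation phiG :: "'g \<Rightarrow> 'a \<Rightarrow> 'a" where "phiG g \<equiv> phig sm z \<phi> g"

lemma grading_in_carrier: "s \<noteq> z \<Longrightarrow> \<phi> s \<in> carrier G"
  and grading_mult: "a \<noteq> z \<Longrightarrow> b \<noteq> z \<Longrightarrow> a \<cdot> b \<noteq> z \<Longrightarrow> \<phi> (a \<cdot> b) = \<phi> a \<otimes>\<^bsub>G\<^esub> \<phi> b"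
  using grading unfolding pure_grading_def by blast+

lemma grading_eq_one_iff: "s \<noteq> z \<Longrightarrow> \<phi> s = \<one>\<^bsub>G\<^esub> \<longleftrightarrow> s \<in> E"
  using grading unfolding pure_grading_def by blast

lemma grading_star:
  assumes a: "a \<noteq> z"
  shows "\<phi> (star a) = inv\<^bsub>G\<^esub> (\<phi> a)"
proof -
  have "\<phi> a \<otimes>\<^bsub>G\<^esub> \<phi> (star a) = \<phi> (a \<cdot> star a)"
    using grading_mult[OF a star_nonzero[OF a] mult_star_nonzero[OF a]] ..
  also have "\<dots> = \<one>\<^bsub>G\<^esub>"
    using grading_eq_one_iff[OF mult_star_nonzero[OF a]] by (simp add: idems_iff)
  finally have "\<phi> (star a) \<otimes>\<^bsub>G\<^esub> \<phi> a = \<one>\<^bsub>G\<^esub>"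
    using G.inv_comm grading_in_carrier a star_nonzero by blast
  then show ?thesis
    using G.inv_equality grading_in_carrier a star_nonzero by metis
qed

lemma EG_eq:
  "EG g = (if \<exists>s. s \<noteq> z \<and> \<phi> s = g
      then {x \<in> E. \<exists>s. s \<noteq> z \<and> \<phi> s = g \<and> x \<cdot> (s \<cdot> star s) = x}
      else {z})"
  unfolding Eg_def sleq_def by (auto simp del: mult_assoc)

lemma zero_in_EG: "z \<in> EG g"
  and EG_subset_idems: "EG g \<subseteq> E"
  unfolding EG_eq using zero_in_idems by auto

lemma EG_intro: "s \<noteq> z \<Longrightarrow> \<phi> s = g \<Longrightarrow> x \<in> E \<Longrightarrow> x \<cdot> (s \<cdot> star s) = x \<Longrightarrow> x \<in> EG g"
  unfolding EG_eq by auto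

lemma EG_elim: "x \<in> EG g \<Longrightarrow> x \<noteq> z \<Longrightarrow> \<exists>s. s \<noteq> z \<and> \<phi> s = g \<and> x \<cdot> (s \<cdot> star s) = x"
  unfolding EG_eq by (auto split: if_splits)

lemma EG_down_closed: "down_closed E sm (EG g)"
  unfolding down_closed_def
proof (intro conjI ballI impI EG_subset_idems)
  fix x y assume x: "x \<in> EG g" and y: "y \<in> E" and "sleq sm y x"
  then have yx: "y \<cdot> x = y"
    unfolding sleq_def by simp
  show "y \<in> EG g"
  proof (cases "y = z")
    case False
    then obtain s where s: "s \<noteq> z" "\<phi> s = g" "x \<cdot> (s \<cdot> star s) = x"
      using EG_elim[OF x] yx by fastforce
    have "y \<cdot> (s \<cdot> star s) = y"
      using mult_absorb[OF yx, of "s \<cdot> star s"] s(3) yx by simp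
    then show ?thesis
      by (rule EG_intro[OF s(1,2) y])
  qed (simp add: zero_in_EG)
qed

lemma EG_inv_intro: "s \<noteq> z \<Longrightarrow> \<phi> s = g \<Longrightarrow> x \<in> E \<Longrightarrow> x \<cdot> (star s \<cdot> s) = x \<Longrightarrow> x \<in> EG (inv\<^bsub>G\<^esub> g)"
  using EG_intro[of "star s"] star_nonzero grading_star by simp

lemma EG_inv_iff:
  assumes g: "g \<in> carrier G" and xz: "x \<noteq> z"
  shows "x \<in> EG (inv\<^bsub>G\<^esub> g) \<longleftrightarrow> x \<in> E \<and> (\<exists>s. s \<noteq> z \<and> \<phi> s = g \<and> x \<cdot> (star s \<cdot> s) = x)"
proof
  assume x: "x \<in> EG (inv\<^bsub>G\<^esub> g)"
  then obtain t where t: "t \<noteq> z" "\<phi> t = inv\<^bsub>G\<^esub> g" "x \<cdot> (t \<cdot> star t) = x"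
    using EG_elim xz by blast
  then have "star t \<noteq> z" "\<phi> (star t) = g" "x \<cdot> (star (star t) \<cdot> star t) = x"
    using star_nonzero grading_star g by simp_all
  then show "x \<in> E \<and> (\<exists>s. s \<noteq> z \<and> \<phi> s = g \<and> x \<cdot> (star s \<cdot> s) = x)"
    using x EG_subset_idems by blast
next
  assume "x \<in> E \<and> (\<exists>s. s \<noteq> z \<and> \<phi> s = g \<and> x \<cdot> (star s \<cdot> s) = x)"
  then show "x \<in> EG (inv\<^bsub>G\<^esub> g)"
    using EG_inv_intro by blast
qed

lemma EG_one: "EG \<one>\<^bsub>G\<^esub> = E"
proof
  show "E \<subseteq> EG \<one>\<^bsub>G\<^esub>"
  proof
    fix x assume x: "x \<in> E"
    show "x \<in> EG \<one>\<^bsub>G\<^esub>"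
    proof (cases "x = z")
      case False
      then show ?thesis
        using x grading_eq_one_iff star_idems[OF x] by (intro EG_intro[of x]) (simp_all add: idems_iff)
    qed (simp add: zero_in_EG)
  qed
qed (rule EG_subset_idems)

lemma phiG_zero: "phiG g z = z"
  unfolding phig_def Let_def by simp

text \<open>Well-definedness of \<open>\<phi>\<^sub>g\<close>: for \<open>c = s t\<^sup>*\<close> one has \<open>s x s\<^sup>* = c (t x t\<^sup>*) c\<^sup>*\<close>
  and \<open>t x t\<^sup>* = c\<^sup>* (s x s\<^sup>*) c\<close>, and \<open>c\<close> is zero or, having degree \<open>1\<close>, idempotent.\<close>

lemma conj_independent:
  assumes s: "s \<noteq> z" "\<phi> s = g" and t: "t \<noteq> z" "\<phi> t = g"
    and x: "x \<in> E" "x \<cdot> (star s \<cdot> s) = x" "x \<cdot> (star t \<cdot> t) = x"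
  shows "s \<cdot> (x \<cdot> star s) = t \<cdot> (x \<cdot> star t)"
proof -
  define c where "c = s \<cdot> star t"
  have xx: "x \<cdot> x = x"
    using x(1) idems_iff by blast
  have st: "star s \<cdot> (s \<cdot> (x \<cdot> w)) = x \<cdot> w" "star t \<cdot> (t \<cdot> (x \<cdot> w)) = x \<cdot> w" for w
    using idem_below_star_mult[OF x(1,2)] idem_below_star_mult[OF x(1,3)] by (metis mult_assoc)+
  have A: "s \<cdot> (x \<cdot> star s) = c \<cdot> (t \<cdot> (x \<cdot> star t)) \<cdot> star c"
    unfolding c_def star_mult star_star using st(2) mult_absorb[OF x(3)] by simp
  have B: "t \<cdot> (x \<cdot> star t) = star c \<cdot> (s \<cdot> (x \<cdot> star s)) \<cdot> c"
    unfolding c_def star_mult star_star using st(1) mult_absorb[OF x(2)] by simp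
  show ?thesis
  proof (cases "c = z")
    case True
    then show ?thesis
      using A B star_idem[of z] by simp
  next
    case False
    have "\<phi> c = \<phi> s \<otimes>\<^bsub>G\<^esub> inv\<^bsub>G\<^esub> (\<phi> t)"
      using grading_mult[OF s(1) star_nonzero[OF t(1)]] False grading_star[OF t(1)]
      unfolding c_def by simp
    then have "c \<in> E"
      using grading_eq_one_iff[OF False] s t grading_in_carrier[OF s(1)] by simp
    then have c: "c \<cdot> c = c" "star c = c"
      using star_idems idems_iff by blast+
    have absorb: "c \<cdot> (y \<cdot> c) = c \<cdot> y" if "y \<cdot> y = y" for y
      using idem_commute[OF that c(1)] mult_absorb[OF c(1)] by simp
    have "s \<cdot> (x \<cdot> star s) = c \<cdot> (t \<cdot> (x \<cdot> star t))"
      using A absorb[of "t \<cdot> (x \<cdot> star t)"] c(2) mult_absorb[OF xx] mult_absorb[OF x(3)] by simp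
    moreover have "t \<cdot> (x \<cdot> star t) = c \<cdot> (s \<cdot> (x \<cdot> star s))"
      using B absorb[of "s \<cdot> (x \<cdot> star s)"] c(2) mult_absorb[OF xx] mult_absorb[OF x(2)] by simp
    ultimately show ?thesis
      using mult_absorb[OF c(1)] by simp
  qed
qed

lemma phiG_eq:
  assumes s: "s \<noteq> z" "\<phi> s = g" and x: "x \<in> E" "x \<cdot> (star s \<cdot> s) = x"
  shows "phiG g x = s \<cdot> (x \<cdot> star s)"
proof -
  define t where "t = (SOME t. t \<noteq> z \<and> \<phi> t = g \<and> sleq sm x (star t \<cdot> t))"
  have "\<exists>t. t \<noteq> z \<and> \<phi> t = g \<and> sleq sm x (star t \<cdot> t)"
    using s x unfolding sleq_def by (intro exI[of _ s]) simp
  then have "t \<noteq> z \<and> \<phi> t = g \<and> sleq sm x (star t \<cdot> t)"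
    unfolding t_def by (rule someI_ex)
  then have t: "t \<noteq> z" "\<phi> t = g" "x \<cdot> (star t \<cdot> t) = x"
    unfolding sleq_def by auto
  show ?thesis
    unfolding phig_def t_def[symmetric] Let_def
    using conj_independent[OF t(1,2) s x(1) t(3) x(2)] by simp
qed

lemma phiG_comp:
  assumes s: "s \<in> carrier G" and t: "t \<in> carrier G"
    and x1: "x \<in> EG (inv\<^bsub>G\<^esub> t)" and x2: "x \<in> EG (inv\<^bsub>G\<^esub> (s \<otimes>\<^bsub>G\<^esub> t))"
  shows "phiG t x \<in> EG (inv\<^bsub>G\<^esub> s) \<and> phiG s (phiG t x) = phiG (s \<otimes>\<^bsub>G\<^esub> t) x"
proof (cases "x = z")
  case False
  have st: "s \<otimes>\<^bsub>G\<^esub> t \<in> carrier G"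
    using s t by simp
  obtain a where xE: "x \<in> E" and a: "a \<noteq> z" "\<phi> a = t" "x \<cdot> (star a \<cdot> a) = x"
    using EG_inv_iff[OF t False] x1 by blast
  obtain b where b: "b \<noteq> z" "\<phi> b = s \<otimes>\<^bsub>G\<^esub> t" "x \<cdot> (star b \<cdot> b) = x"
    using EG_inv_iff[OF st False] x2 by blast
  define y where "y = a \<cdot> (x \<cdot> star a)"
  define c where "c = b \<cdot> star a"
  have xx: "x \<cdot> x = x"
    using xE idems_iff by blast
  have ax: "star a \<cdot> (a \<cdot> (x \<cdot> w)) = x \<cdot> w" for w
    using idem_below_star_mult[OF xE a(3)] by (metis mult_assoc)
  have phi_t: "phiG t x = y"
    unfolding y_def by (rule phiG_eq[OF a(1,2) xE a(3)])
  have yE: "y \<in> E"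
    unfolding y_def idems_iff using mult_absorb[OF a(3)] mult_absorb[OF xx] by simp
  have y_le: "y \<cdot> (star c \<cdot> c) = y"
    unfolding y_def c_def star_mult star_star using mult_absorb[OF a(3)] mult_absorb[OF b(3)] by simp
  have "star a \<cdot> (y \<cdot> a) = x"
    unfolding y_def using ax idem_below_star_mult[OF xE a(3)] a(3) by simp
  then have "y \<noteq> z"
    using False by auto
  then have cz: "c \<noteq> z"
    using y_le star_idem[of z] by auto
  have phi_c: "\<phi> c = s"
    using grading_mult[OF b(1) star_nonzero[OF a(1)]] cz grading_star[OF a(1)] a(2) b(2) s t
    unfolding c_def by (simp add: G.m_assoc)
  have "y \<in> EG (inv\<^bsub>G\<^esub> s)"
    using EG_inv_intro[OF cz phi_c yE y_le] .
  moreover have "phiG s y = c \<cdot> (y \<cdot> star c)"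
    by (rule phiG_eq[OF cz phi_c yE y_le])
  moreover have "c \<cdot> (y \<cdot> star c) = b \<cdot> (x \<cdot> star b)"
    unfolding y_def c_def star_mult star_star using ax mult_absorb[OF a(3)] by simp
  ultimately show ?thesis
    using phi_t phiG_eq[OF b(1,2) xE b(3)] by simp
qed (simp add: zero_in_EG phiG_zero)

lemma phiG_one: "x \<in> E \<Longrightarrow> phiG \<one>\<^bsub>G\<^esub> x = x"
proof (cases "x = z")
  case False
  assume x: "x \<in> E"
  then have "x \<cdot> x = x" "star x = x" "\<phi> x = \<one>\<^bsub>G\<^esub>"
    using idems_iff star_idems grading_eq_one_iff[OF False] by auto
  then show ?thesis
    using phiG_eq[OF False, of "\<one>\<^bsub>G\<^esub>" x] x mult_absorb[of x x] by simp
qed (simp add: phiG_zero)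

lemma phiG_in:
  assumes g: "g \<in> carrier G" and x: "x \<in> EG (inv\<^bsub>G\<^esub> g)"
  shows "phiG g x \<in> EG g"
    and "phiG (inv\<^bsub>G\<^esub> g) (phiG g x) = x"
proof -
  have "x \<in> EG (inv\<^bsub>G\<^esub> (inv\<^bsub>G\<^esub> g \<otimes>\<^bsub>G\<^esub> g))"
    using g x EG_subset_idems EG_one by auto
  then show "phiG g x \<in> EG g" "phiG (inv\<^bsub>G\<^esub> g) (phiG g x) = x"
    using phiG_comp[of "inv\<^bsub>G\<^esub> g" g x] phiG_one g x EG_subset_idems by auto
qed

lemma phiG_cross:
  assumes s: "s \<in> carrier G" and t: "t \<in> carrier G"
    and x1: "x \<in> EG (inv\<^bsub>G\<^esub> s)" and x2: "x \<in> EG t"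
  shows "phiG s x \<in> EG (s \<otimes>\<^bsub>G\<^esub> t)"
proof -
  let ?r = "inv\<^bsub>G\<^esub> t \<otimes>\<^bsub>G\<^esub> inv\<^bsub>G\<^esub> s"
  have r: "?r \<in> carrier G" "?r \<otimes>\<^bsub>G\<^esub> s = inv\<^bsub>G\<^esub> t" "inv\<^bsub>G\<^esub> ?r = s \<otimes>\<^bsub>G\<^esub> t"
    using s t by (simp_all add: G.m_assoc G.inv_mult_group)
  then show ?thesis
    using phiG_comp[OF r(1) s x1] x2 t by simp
qed

lemma phiG_mono:
  assumes g: "g \<in> carrier G" and x: "x \<in> EG (inv\<^bsub>G\<^esub> g)" and y: "y \<in> EG (inv\<^bsub>G\<^esub> g)"
    and xy: "sleq sm x y"
  shows "sleq sm (phiG g x) (phiG g y)"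
proof (cases "x = z")
  case False
  have xy': "x \<cdot> y = x"
    using xy unfolding sleq_def by simp
  then have "y \<noteq> z"
    using False by auto
  then obtain s where yE: "y \<in> E" and s: "s \<noteq> z" "\<phi> s = g" "y \<cdot> (star s \<cdot> s) = y"
    using EG_inv_iff[OF g] y by blast
  have xE: "x \<in> E"
    using x EG_subset_idems by blast
  have xs: "x \<cdot> (star s \<cdot> s) = x"
    by (metis xy' s(3) mult_assoc)
  show ?thesis
    unfolding sleq_def phiG_eq[OF s(1,2) xE xs] phiG_eq[OF s(1,2) yE s(3)]
    using mult_absorb[OF xs] mult_absorb[OF xy'] by simp
qed (simp add: sleq_def phiG_zero)

end

section \<open>The partial action on compact open sets of tight filters\<close>

lemma gba_iso_image:
  assumes inj: "inj_on f D" and sub: "\<And>V. V \<in> I \<Longrightarrow> V \<subseteq> D"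
    and closed: "\<And>a b. a \<in> I \<Longrightarrow> b \<in> I \<Longrightarrow> a \<union> b \<in> I \<and> a \<inter> b \<in> I \<and> a - b \<in> I"
    and bij: "bij_betw \<theta> I J" and \<theta>: "\<And>V. V \<in> I \<Longrightarrow> \<theta> V = f ` V"
  shows "gba_iso I J \<theta>"
  unfolding gba_iso_def
proof (intro conjI bij ballI)
  fix a b assume a: "a \<in> I" and b: "b \<in> I"
  show "\<theta> (a \<union> b) = \<theta> a \<union> \<theta> b"
    using \<theta> a b closed by (simp add: image_Un)
  show "\<theta> (a \<inter> b) = \<theta> a \<inter> \<theta> b"
    using \<theta> a b closed inj_on_image_Int[OF inj sub sub] by simp
  show "\<theta> (a - b) = \<theta> a - \<theta> b"
  proof -
    have "a - b \<subseteq> D"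
      using sub[OF a] by blast
    then show ?thesis
      using \<theta> a b closed inj_on_image_set_diff[OF inj _ sub[OF b]] by simp
  qed
qed

context graded_inverse_semigroup
begin

lemma EG_downset: "meet_semilattice_downset E sm z (EG g)"
  by (intro meet_semilattice_downset.intro idems_meet_semilattice
      meet_semilattice_downset_axioms.intro EG_down_closed zero_in_EG)

lemma phiG_iso:
  assumes g: "g \<in> carrier G"
  shows "meet_semilattice_iso (EG (inv\<^bsub>G\<^esub> g)) (EG g) sm z (phiG g) (phiG (inv\<^bsub>G\<^esub> g))"
proof (intro meet_semilattice_iso.intro
    meet_semilattice_downset.downset_meet_semilattice[OF EG_downset]
    meet_semilattice_iso_axioms.intro monotone_onI)
  have ig: "inv\<^bsub>G\<^esub> g \<in> carrier G" and iig: "inv\<^bsub>G\<^esub> (inv\<^bsub>G\<^esub> g) = g"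
    using g by simp_all
  show "phiG g x \<in> EG g" "phiG (inv\<^bsub>G\<^esub> g) (phiG g x) = x" if "x \<in> EG (inv\<^bsub>G\<^esub> g)" for x
    using phiG_in[OF g that] by simp_all
  show "phiG (inv\<^bsub>G\<^esub> g) y \<in> EG (inv\<^bsub>G\<^esub> g)" "phiG g (phiG (inv\<^bsub>G\<^esub> g) y) = y" if "y \<in> EG g" for y
    using phiG_in[OF ig, of y] that iig by simp_all
  show "sleq sm (phiG g x) (phiG g y)"
    if "x \<in> EG (inv\<^bsub>G\<^esub> g)" "y \<in> EG (inv\<^bsub>G\<^esub> g)" "sleq sm x y" for x y
    using phiG_mono[OF g that] .
  show "sleq sm (phiG (inv\<^bsub>G\<^esub> g) x) (phiG (inv\<^bsub>G\<^esub> g) y)"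
    if "x \<in> EG g" "y \<in> EG g" "sleq sm x y" for x y
    using phiG_mono[OF ig, of x y] that iig by simp
qed

lemma phiG_monotone_on: "g \<in> carrier G \<Longrightarrow> monotone_on (EG (inv\<^bsub>G\<^esub> g)) (sleq sm) (sleq sm) (phiG g)"
  using meet_semilattice_iso.h_mono[OF phiG_iso] .

lemma phiG_image_subset: "g \<in> carrier G \<Longrightarrow> phiG g ` EG (inv\<^bsub>G\<^esub> g) \<subseteq> E"
  using phiG_in EG_subset_idems by blast

definition tight_dom :: "'g \<Rightarrow> 'a set set" where
  "tight_dom g = tight_filters E sm \<inter> filters_meeting E sm (EG g)"

definition Phi :: "'g \<Rightarrow> 'a set \<Rightarrow> 'a set" where
  "Phi g \<xi> = up_closure E sm (phiG g ` (\<xi> \<inter> EG (inv\<^bsub>G\<^esub> g)))"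

lemma tight_dom_subset: "tight_dom g \<subseteq> tight_filters E sm"
  unfolding tight_dom_def by blast

lemma tight_dom_filter:
  assumes "\<xi> \<in> tight_dom g"
  shows "\<xi> \<in> filters E sm" and "\<xi> \<inter> EG g \<noteq> {}"
  using assms tight_filters_subset unfolding tight_dom_def filters_meeting_def by blast+

lemma openin_tight_dom: "openin (tight_topology E sm) (tight_dom g)"
  unfolding tight_dom_def
  using openin_tight_topology_Int meet_semilattice_downset.openin_filters_meeting[OF EG_downset] .

lemma tight_dom_one: "tight_dom \<one>\<^bsub>G\<^esub> = tight_filters E sm"
proof -
  have "\<xi> \<in> filters_meeting E sm E" if "\<xi> \<in> tight_filters E sm" for \<xi>
  proof -
    have F: "\<xi> \<in> filters E sm"
      using that tight_filters_subset by blast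
    then show ?thesis
      using filters_nonempty[OF F] filters_subset[OF F] unfolding filters_meeting_def by blast
  qed
  then show ?thesis
    unfolding tight_dom_def EG_one by blast
qed

lemma homeomorphic_maps_tight_dom:
  "homeomorphic_maps (subtopology (tight_topology E sm) (tight_dom g)) (tight_topology (EG g) sm)
     (\<lambda>F. F \<inter> EG g) (up_closure E sm)"
  unfolding tight_dom_def
  by (rule meet_semilattice_downset.homeomorphic_maps_restrict_tight_topology[OF EG_downset])

lemma tight_dom_correspondence:
  shows "\<xi> \<in> tight_dom g \<Longrightarrow> \<xi> \<inter> EG g \<in> tight_filters (EG g) sm"
    and "\<xi> \<in> tight_dom g \<Longrightarrow> up_closure E sm (\<xi> \<inter> EG g) = \<xi>"
    and "\<eta> \<in> tight_filters (EG g) sm \<Longrightarrow> up_closure E sm \<eta> \<in> tight_dom g"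
    and "\<eta> \<in> tight_filters (EG g) sm \<Longrightarrow> up_closure E sm \<eta> \<inter> EG g = \<eta>"
proof -
  have top: "topspace (subtopology (tight_topology E sm) (tight_dom g)) = tight_dom g"
    using tight_dom_subset by auto
  have restrict: "continuous_map (subtopology (tight_topology E sm) (tight_dom g))
      (tight_topology (EG g) sm) (\<lambda>F. F \<inter> EG g)"
    and up: "continuous_map (tight_topology (EG g) sm)
      (subtopology (tight_topology E sm) (tight_dom g)) (up_closure E sm)"
    and inverse: "\<forall>\<xi>\<in>tight_dom g. up_closure E sm (\<xi> \<inter> EG g) = \<xi>"
      "\<forall>\<eta>\<in>tight_filters (EG g) sm. up_closure E sm \<eta> \<inter> EG g = \<eta>"
    using homeomorphic_maps_tight_dom[of g] unfolding homeomorphic_maps_def top by simp_all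
  show "\<xi> \<in> tight_dom g \<Longrightarrow> \<xi> \<inter> EG g \<in> tight_filters (EG g) sm"
    using continuous_map_image_subset_topspace[OF restrict] unfolding top by auto
  show "\<eta> \<in> tight_filters (EG g) sm \<Longrightarrow> up_closure E sm \<eta> \<in> tight_dom g"
    using continuous_map_image_subset_topspace[OF up] unfolding top by auto
  show "\<xi> \<in> tight_dom g \<Longrightarrow> up_closure E sm (\<xi> \<inter> EG g) = \<xi>"
    "\<eta> \<in> tight_filters (EG g) sm \<Longrightarrow> up_closure E sm \<eta> \<inter> EG g = \<eta>"
    using inverse by simp_all
qed

lemma Phi_homeomorphic_map:
  assumes g: "g \<in> carrier G"
  shows "homeomorphic_map (subtopology (tight_topology E sm) (tight_dom (inv\<^bsub>G\<^esub> g)))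
    (subtopology (tight_topology E sm) (tight_dom g)) (Phi g)"
proof -
  have restrict: "homeomorphic_map (subtopology (tight_topology E sm) (tight_dom (inv\<^bsub>G\<^esub> g)))
      (tight_topology (EG (inv\<^bsub>G\<^esub> g)) sm) (\<lambda>F. F \<inter> EG (inv\<^bsub>G\<^esub> g))"
    using homeomorphic_maps_imp_map[OF homeomorphic_maps_tight_dom] .
  have image: "homeomorphic_map (tight_topology (EG (inv\<^bsub>G\<^esub> g)) sm) (tight_topology (EG g) sm)
      (\<lambda>F. phiG g ` F)"
    using homeomorphic_maps_imp_map[OF
        meet_semilattice_iso.homeomorphic_maps_image_tight_topology[OF phiG_iso[OF g]]] .
  have up: "homeomorphic_map (tight_topology (EG g) sm)
      (subtopology (tight_topology E sm) (tight_dom g)) (up_closure E sm)"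
    using homeomorphic_maps_imp_map[OF homeomorphic_maps_sym[THEN iffD1, OF homeomorphic_maps_tight_dom]] .
  have "Phi g = up_closure E sm \<circ> ((\<lambda>F. phiG g ` F) \<circ> (\<lambda>F. F \<inter> EG (inv\<^bsub>G\<^esub> g)))"
    unfolding Phi_def by auto
  then show ?thesis
    using homeomorphic_map_compose[OF homeomorphic_map_compose[OF restrict image] up] by simp
qed

lemma Phi_image_Tc:
  assumes g: "g \<in> carrier G" and V: "V \<in> Tc E sm" "V \<subseteq> tight_dom (inv\<^bsub>G\<^esub> g)"
  shows "Phi g ` V \<in> Tc E sm" and "Phi g ` V \<subseteq> tight_dom g"
proof -
  have top: "topspace (subtopology (tight_topology E sm) (tight_dom h)) = tight_dom h" for h
    using tight_dom_subset by auto
  show sub: "Phi g ` V \<subseteq> tight_dom g"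
    using homeomorphic_imp_surjective_map[OF Phi_homeomorphic_map[OF g]] V(2) unfolding top by blast
  have "openin (subtopology (tight_topology E sm) (tight_dom g)) (Phi g ` V) \<and>
      compactin (subtopology (tight_topology E sm) (tight_dom g)) (Phi g ` V) \<longleftrightarrow>
      openin (subtopology (tight_topology E sm) (tight_dom (inv\<^bsub>G\<^esub> g))) V \<and>
      compactin (subtopology (tight_topology E sm) (tight_dom (inv\<^bsub>G\<^esub> g))) V"
    by (rule compact_openin_homeomorphic_image[OF Phi_homeomorphic_map[OF g]]) (use top V(2) in blast)
  then show "Phi g ` V \<in> Tc E sm"
    using V sub unfolding Tc_def compact_openin_open_subtopology[OF openin_tight_dom] by simp
qed

lemma Phi_in_tight_dom: "g \<in> carrier G \<Longrightarrow> \<xi> \<in> tight_dom (inv\<^bsub>G\<^esub> g) \<Longrightarrow> Phi g \<xi> \<in> tight_dom g"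
  using homeomorphic_imp_surjective_map[OF Phi_homeomorphic_map] tight_dom_subset
  by (metis image_eqI inf.absorb_iff2 topspace_subtopology topspace_tight_topology)

lemma Phi_one:
  assumes \<xi>: "\<xi> \<in> tight_filters E sm"
  shows "Phi \<one>\<^bsub>G\<^esub> \<xi> = \<xi>"
proof -
  have F: "\<xi> \<in> filters E sm"
    using \<xi> tight_filters_subset by blast
  then have "phiG \<one>\<^bsub>G\<^esub> ` (\<xi> \<inter> EG (inv\<^bsub>G\<^esub> \<one>\<^bsub>G\<^esub>)) = \<xi>"
    using filters_subset[OF F] phiG_one EG_one by (force simp: image_iff)
  then show ?thesis
    unfolding Phi_def using meet_semilattice_zero.up_closure_filter[OF idems_meet_semilattice F] by simp
qed

lemma Phi_comp:
  assumes s: "s \<in> carrier G" and t: "t \<in> carrier G"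
    and \<xi>: "\<xi> \<in> tight_dom (inv\<^bsub>G\<^esub> t)" "\<xi> \<in> tight_dom (inv\<^bsub>G\<^esub> (s \<otimes>\<^bsub>G\<^esub> t))"
  shows "Phi s (Phi t \<xi>) = Phi (s \<otimes>\<^bsub>G\<^esub> t) \<xi>"
proof -
  interpret idems: meet_semilattice_zero E sm z
    by (rule idems_meet_semilattice)
  have st: "s \<otimes>\<^bsub>G\<^esub> t \<in> carrier G"
    using s t by simp
  have F: "\<xi> \<in> filters E sm"
    using tight_dom_filter(1)[OF \<xi>(1)] .
  obtain e1 e2 where e1: "e1 \<in> \<xi> \<inter> EG (inv\<^bsub>G\<^esub> t)" and e2: "e2 \<in> \<xi> \<inter> EG (inv\<^bsub>G\<^esub> (s \<otimes>\<^bsub>G\<^esub> t))"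
    using tight_dom_filter(2) \<xi> by blast
  define A where "A = \<xi> \<inter> EG (inv\<^bsub>G\<^esub> t) \<inter> EG (inv\<^bsub>G\<^esub> (s \<otimes>\<^bsub>G\<^esub> t))"
  have comp: "phiG t x \<in> EG (inv\<^bsub>G\<^esub> s)" "phiG s (phiG t x) = phiG (s \<otimes>\<^bsub>G\<^esub> t) x" if "x \<in> A" for x
    using phiG_comp[OF s t] that unfolding A_def by blast+
  have Phi_t: "Phi t \<xi> = up_closure E sm (phiG t ` A)"
    unfolding Phi_def A_def
    using idems.up_closure_image_restrict[OF F EG_down_closed EG_down_closed e2
        phiG_monotone_on[OF t] phiG_image_subset[OF t]] by simp
  have "phiG t ` A \<subseteq> EG (inv\<^bsub>G\<^esub> s)"
    using comp(1) by blast
  then have "Phi s (Phi t \<xi>) = up_closure E sm (phiG s ` phiG t ` A)"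
    unfolding Phi_t Phi_def[of s]
    by (rule idems.up_closure_image_up_closure[OF _ EG_down_closed phiG_monotone_on[OF s]
          phiG_image_subset[OF s]])
  also have "phiG s ` phiG t ` A = phiG (s \<otimes>\<^bsub>G\<^esub> t) ` A"
    unfolding image_image using comp(2) by (rule image_cong[OF refl])
  also have "up_closure E sm (phiG (s \<otimes>\<^bsub>G\<^esub> t) ` A) = Phi (s \<otimes>\<^bsub>G\<^esub> t) \<xi>"
    unfolding Phi_def A_def
    using idems.up_closure_image_restrict[OF F EG_down_closed EG_down_closed e1
        phiG_monotone_on[OF st] phiG_image_subset[OF st]] by (simp add: Int_ac)
  finally show ?thesis .
qed

lemma Phi_inverse:
  assumes g: "g \<in> carrier G" and \<xi>: "\<xi> \<in> tight_dom (inv\<^bsub>G\<^esub> g)"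
  shows "Phi (inv\<^bsub>G\<^esub> g) (Phi g \<xi>) = \<xi>"
proof -
  have "\<xi> \<in> tight_dom (inv\<^bsub>G\<^esub> (inv\<^bsub>G\<^esub> g \<otimes>\<^bsub>G\<^esub> g))"
    using g \<xi> tight_dom_subset tight_dom_one by auto
  then have "Phi (inv\<^bsub>G\<^esub> g) (Phi g \<xi>) = Phi (inv\<^bsub>G\<^esub> g \<otimes>\<^bsub>G\<^esub> g) \<xi>"
    using Phi_comp g \<xi> by simp
  also have "\<dots> = \<xi>"
    using g \<xi> Phi_one tight_dom_subset by auto
  finally show ?thesis .
qed

lemma Phi_in_tight_dom_mult:
  assumes s: "s \<in> carrier G" and t: "t \<in> carrier G"
    and \<xi>: "\<xi> \<in> tight_dom (inv\<^bsub>G\<^esub> s)" "\<xi> \<in> tight_dom t"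
  shows "Phi s \<xi> \<in> tight_dom (s \<otimes>\<^bsub>G\<^esub> t)"
proof -
  obtain e where e: "e \<in> \<xi>" "e \<in> EG (inv\<^bsub>G\<^esub> s)" "e \<in> EG t"
    using meet_semilattice_zero.filter_meets_two_downsets[OF idems_meet_semilattice
        tight_dom_filter(1)[OF \<xi>(1)] EG_down_closed EG_down_closed
        tight_dom_filter(2)[OF \<xi>(1)] tight_dom_filter(2)[OF \<xi>(2)]] by blast
  have "phiG s e \<in> EG (s \<otimes>\<^bsub>G\<^esub> t)"
    using phiG_cross[OF s t e(2,3)] .
  moreover have "phiG s e \<in> Phi s \<xi>"
    using e phiG_in[OF s e(2)] EG_subset_idems
      meet_semilattice_zero.sleq_refl[OF idems_meet_semilattice]
    unfolding Phi_def up_closure_def by blast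
  moreover have "Phi s \<xi> \<in> tight_filters E sm"
    using Phi_in_tight_dom[OF s \<xi>(1)] tight_dom_subset by blast
  ultimately show ?thesis
    using tight_filters_subset unfolding tight_dom_def filters_meeting_def by blast
qed

lemma iota_eq:
  assumes U: "U \<subseteq> tight_filters (EG g) sm"
  shows "iota sm z \<phi> g U = up_closure E sm ` U"
proof (intro equalityI subsetI)
  fix \<xi> assume "\<xi> \<in> iota sm z \<phi> g U"
  then have \<xi>: "\<xi> \<in> tight_dom g" "\<xi> \<inter> EG g \<in> U"
    using tight_filters_subset unfolding iota_def tight_dom_def filters_meeting_def by blast+
  then show "\<xi> \<in> up_closure E sm ` U"
    using tight_dom_correspondence(2) by (metis image_eqI)
next
  fix \<xi> assume "\<xi> \<in> up_closure E sm ` U"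
  then obtain \<eta> where \<eta>: "\<eta> \<in> U" "\<xi> = up_closure E sm \<eta>"
    by blast
  then have "\<xi> \<in> tight_dom g" "\<xi> \<inter> EG g = \<eta>"
    using tight_dom_correspondence(3,4) U by blast+
  then show "\<xi> \<in> iota sm z \<phi> g U"
    using \<eta>(1) tight_dom_filter unfolding iota_def tight_dom_def by blast
qed

lemma Ig_eq: "Ig sm z \<phi> g = {V \<in> Tc E sm. V \<subseteq> tight_dom g}"
proof -
  have "Ig sm z \<phi> g = (\<lambda>U. up_closure E sm ` U) ` Tc (EG g) sm"
    unfolding Ig_def by (rule image_cong[OF refl iota_eq[OF Tc_subset]])
  also have "\<dots> = {V. openin (subtopology (tight_topology E sm) (tight_dom g)) V \<and>
      compactin (subtopology (tight_topology E sm) (tight_dom g)) V}"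
    unfolding Tc_def
    using compact_openin_homeomorphic_maps[OF homeomorphic_maps_sym[THEN iffD1, OF homeomorphic_maps_tight_dom]] .
  also have "\<dots> = {V \<in> Tc E sm. V \<subseteq> tight_dom g}"
    unfolding Tc_def compact_openin_open_subtopology[OF openin_tight_dom] by blast
  finally show ?thesis .
qed

lemma theta_eq:
  assumes g: "g \<in> carrier G" and V: "V \<in> Ig sm z \<phi> (inv\<^bsub>G\<^esub> g)"
  shows "theta sm z G \<phi> g V = Phi g ` V"
proof -
  let ?h = "inv\<^bsub>G\<^esub> g"
  define U0 where "U0 = (\<lambda>F. F \<inter> EG ?h) ` V"
  have V_dom: "V \<subseteq> tight_dom ?h"
    using V Ig_eq by blast
  have U0_tight: "U0 \<subseteq> tight_filters (EG ?h) sm"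
    using tight_dom_correspondence(1) V_dom unfolding U0_def by blast
  have unique: "U = U0" if U: "U \<in> Tc (EG ?h) sm" "iota sm z \<phi> ?h U = V" for U
  proof -
    have U_tight: "U \<subseteq> tight_filters (EG ?h) sm"
      using Tc_subset[OF U(1)] .
    have "U0 = (\<lambda>\<eta>. up_closure E sm \<eta> \<inter> EG ?h) ` U"
      unfolding U0_def U(2)[symmetric] iota_eq[OF U_tight] image_image ..
    also have "\<dots> = (\<lambda>\<eta>. \<eta>) ` U"
      using tight_dom_correspondence(4) U_tight by (intro image_cong) blast+
    finally show "U = U0"
      by simp
  qed
  obtain U1 where "U1 \<in> Tc (EG ?h) sm" "iota sm z \<phi> ?h U1 = V"
    using V unfolding Ig_def by blast
  then have the: "(THE U. U \<in> Tc (EG ?h) sm \<and> iota sm z \<phi> ?h U = V) = U0"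
    using unique by (intro the_equality) auto
  have "hat_phig sm z \<phi> g U0 \<subseteq> tight_filters (EG g) sm"
    unfolding hat_phig_def
    using meet_semilattice_iso.image_tight_filter[OF phiG_iso[OF g]] U0_tight by blast
  then have "theta sm z G \<phi> g V = up_closure E sm ` (\<lambda>F. phiG g ` F) ` U0"
    unfolding theta_def the by (simp add: iota_eq hat_phig_def)
  also have "\<dots> = Phi g ` V"
    unfolding U0_def Phi_def image_image ..
  finally show ?thesis .
qed

lemma Ig_one: "Ig sm z \<phi> \<one>\<^bsub>G\<^esub> = Tc E sm"
  unfolding Ig_eq tight_dom_one using Tc_subset by blast

lemma Ig_closed:
  assumes "a \<in> Ig sm z \<phi> g" "b \<in> Ig sm z \<phi> g"
  shows "a \<union> b \<in> Ig sm z \<phi> g \<and> a \<inter> b \<in> Ig sm z \<phi> g \<and> a - b \<in> Ig sm z \<phi> g"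
proof -
  have "a \<in> Tc E sm" "b \<in> Tc E sm" "a \<subseteq> tight_dom g" "b \<subseteq> tight_dom g"
    using assms unfolding Ig_eq by blast+
  then show ?thesis
    unfolding Ig_eq by (auto intro: Tc_Un Tc_Int Tc_Diff)
qed

lemma Ig_memD:
  assumes "V \<in> Ig sm z \<phi> g"
  shows "V \<in> Tc E sm" and "V \<subseteq> tight_dom g"
  using assms unfolding Ig_eq by blast+

lemma gba_ideal_Ig: "gba_ideal (Tc E sm) (Ig sm z \<phi> g)"
  unfolding gba_ideal_def
proof (intro conjI ballI subsetI)
  fix a b assume a: "a \<in> Ig sm z \<phi> g"
  then show "a \<in> Tc E sm"
    by (rule Ig_memD)
  show "a \<union> b \<in> Ig sm z \<phi> g" if "b \<in> Ig sm z \<phi> g"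
    using Ig_closed[OF a that] by blast
  show "a \<inter> b \<in> Ig sm z \<phi> g" if "b \<in> Tc E sm"
    using Tc_Int[OF Ig_memD(1)[OF a] that] Ig_memD(2)[OF a] unfolding Ig_eq by blast
qed

lemma Phi_image_Ig:
  assumes g: "g \<in> carrier G" and V: "V \<in> Ig sm z \<phi> (inv\<^bsub>G\<^esub> g)"
  shows "Phi g ` V \<in> Ig sm z \<phi> g"
  unfolding Ig_eq using Phi_image_Tc[OF g Ig_memD[OF V]] by blast

lemma theta_inverse:
  assumes g: "g \<in> carrier G" and V: "V \<in> Ig sm z \<phi> (inv\<^bsub>G\<^esub> g)"
  shows "theta sm z G \<phi> (inv\<^bsub>G\<^esub> g) (theta sm z G \<phi> g V) = V"
proof -
  have ig: "inv\<^bsub>G\<^esub> g \<in> carrier G" and iig: "inv\<^bsub>G\<^esub> (inv\<^bsub>G\<^esub> g) = g"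
    using g by simp_all
  have "theta sm z G \<phi> (inv\<^bsub>G\<^esub> g) (theta sm z G \<phi> g V) = Phi (inv\<^bsub>G\<^esub> g) ` Phi g ` V"
    using theta_eq[OF g V] theta_eq[OF ig] Phi_image_Ig[OF g V] iig by simp
  also have "\<dots> = (\<lambda>\<xi>. \<xi>) ` V"
    unfolding image_image using Phi_inverse[OF g] Ig_memD(2)[OF V] by (intro image_cong) blast+
  finally show ?thesis
    by simp
qed

lemma gba_iso_theta:
  assumes t: "t \<in> carrier G"
  shows "gba_iso (Ig sm z \<phi> (inv\<^bsub>G\<^esub> t)) (Ig sm z \<phi> t) (theta sm z G \<phi> t)"
proof (rule gba_iso_image[where f = "Phi t" and D = "tight_dom (inv\<^bsub>G\<^esub> t)"])
  have it: "inv\<^bsub>G\<^esub> t \<in> carrier G" and iit: "inv\<^bsub>G\<^esub> (inv\<^bsub>G\<^esub> t) = t"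
    using t by simp_all
  show "inj_on (Phi t) (tight_dom (inv\<^bsub>G\<^esub> t))"
    using Phi_inverse[OF t] by (rule inj_on_inverseI)
  show "V \<subseteq> tight_dom (inv\<^bsub>G\<^esub> t)" if "V \<in> Ig sm z \<phi> (inv\<^bsub>G\<^esub> t)" for V
    using Ig_memD(2)[OF that] .
  show "a \<union> b \<in> Ig sm z \<phi> (inv\<^bsub>G\<^esub> t) \<and> a \<inter> b \<in> Ig sm z \<phi> (inv\<^bsub>G\<^esub> t) \<and> a - b \<in> Ig sm z \<phi> (inv\<^bsub>G\<^esub> t)"
    if "a \<in> Ig sm z \<phi> (inv\<^bsub>G\<^esub> t)" "b \<in> Ig sm z \<phi> (inv\<^bsub>G\<^esub> t)" for a b
    using Ig_closed[OF that] .
  show "theta sm z G \<phi> t V = Phi t ` V" if "V \<in> Ig sm z \<phi> (inv\<^bsub>G\<^esub> t)" for V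
    using theta_eq[OF t that] .
  have maps: "theta sm z G \<phi> g V \<in> Ig sm z \<phi> g"
    if "g \<in> carrier G" "V \<in> Ig sm z \<phi> (inv\<^bsub>G\<^esub> g)" for g V
    using theta_eq[OF that] Phi_image_Ig[OF that] by simp
  show "bij_betw (theta sm z G \<phi> t) (Ig sm z \<phi> (inv\<^bsub>G\<^esub> t)) (Ig sm z \<phi> t)"
  proof (rule bij_betw_byWitness[where f' = "theta sm z G \<phi> (inv\<^bsub>G\<^esub> t)"])
    show "\<forall>V\<in>Ig sm z \<phi> (inv\<^bsub>G\<^esub> t). theta sm z G \<phi> (inv\<^bsub>G\<^esub> t) (theta sm z G \<phi> t V) = V"
      using theta_inverse[OF t] by blast
    show "\<forall>W\<in>Ig sm z \<phi> t. theta sm z G \<phi> t (theta sm z G \<phi> (inv\<^bsub>G\<^esub> t) W) = W"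
      using theta_inverse[OF it] iit by simp
    show "theta sm z G \<phi> t ` Ig sm z \<phi> (inv\<^bsub>G\<^esub> t) \<subseteq> Ig sm z \<phi> t"
      using maps[OF t] by blast
    show "theta sm z G \<phi> (inv\<^bsub>G\<^esub> t) ` Ig sm z \<phi> t \<subseteq> Ig sm z \<phi> (inv\<^bsub>G\<^esub> t)"
      using maps[OF it] iit by auto
  qed
qed

lemma theta_one:
  assumes V: "V \<in> Tc E sm"
  shows "theta sm z G \<phi> \<one>\<^bsub>G\<^esub> V = V"
proof -
  have "theta sm z G \<phi> \<one>\<^bsub>G\<^esub> V = Phi \<one>\<^bsub>G\<^esub> ` V"
    using theta_eq[of "\<one>\<^bsub>G\<^esub>" V] V Ig_one by simp
  also have "\<dots> = (\<lambda>\<xi>. \<xi>) ` V"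
    using Phi_one Tc_subset[OF V] by (intro image_cong) blast+
  finally show ?thesis
    by simp
qed

lemma theta_image_Ig_Int:
  assumes s: "s \<in> carrier G" and t: "t \<in> carrier G"
  shows "theta sm z G \<phi> s ` (Ig sm z \<phi> (inv\<^bsub>G\<^esub> s) \<inter> Ig sm z \<phi> t) =
    Ig sm z \<phi> s \<inter> Ig sm z \<phi> (s \<otimes>\<^bsub>G\<^esub> t)"
proof (intro equalityI subsetI)
  fix W assume "W \<in> theta sm z G \<phi> s ` (Ig sm z \<phi> (inv\<^bsub>G\<^esub> s) \<inter> Ig sm z \<phi> t)"
  then obtain V where V: "V \<in> Ig sm z \<phi> (inv\<^bsub>G\<^esub> s)" "V \<in> Ig sm z \<phi> t"
    and W: "W = Phi s ` V"
    using theta_eq[OF s] by blast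
  have "Phi s ` V \<subseteq> tight_dom (s \<otimes>\<^bsub>G\<^esub> t)"
    using Phi_in_tight_dom_mult[OF s t] Ig_memD(2)[OF V(1)] Ig_memD(2)[OF V(2)] by blast
  then show "W \<in> Ig sm z \<phi> s \<inter> Ig sm z \<phi> (s \<otimes>\<^bsub>G\<^esub> t)"
    using Phi_image_Ig[OF s V(1)] Ig_memD(1) unfolding W Ig_eq by blast
next
  fix W assume W: "W \<in> Ig sm z \<phi> s \<inter> Ig sm z \<phi> (s \<otimes>\<^bsub>G\<^esub> t)"
  have inv_s: "inv\<^bsub>G\<^esub> s \<in> carrier G" and st: "s \<otimes>\<^bsub>G\<^esub> t \<in> carrier G"
    and iis: "inv\<^bsub>G\<^esub> (inv\<^bsub>G\<^esub> s) = s" and cancel: "inv\<^bsub>G\<^esub> s \<otimes>\<^bsub>G\<^esub> (s \<otimes>\<^bsub>G\<^esub> t) = t"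
    using s t by (simp_all add: G.m_assoc[symmetric])
  have W': "W \<in> Ig sm z \<phi> (inv\<^bsub>G\<^esub> (inv\<^bsub>G\<^esub> s))"
    using W iis by simp
  let ?V = "theta sm z G \<phi> (inv\<^bsub>G\<^esub> s) W"
  have V_eq: "?V = Phi (inv\<^bsub>G\<^esub> s) ` W"
    using theta_eq[OF inv_s W'] .
  have V1: "?V \<in> Ig sm z \<phi> (inv\<^bsub>G\<^esub> s)"
    using Phi_image_Ig[OF inv_s W'] V_eq by simp
  have "?V \<subseteq> tight_dom t"
    using Phi_in_tight_dom_mult[OF inv_s st] Ig_memD(2)[OF W'] W cancel
    unfolding V_eq Ig_eq by auto
  then have "?V \<in> Ig sm z \<phi> t"
    using Ig_memD(1)[OF V1] unfolding Ig_eq by blast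
  moreover have "theta sm z G \<phi> s ?V = W"
    using theta_inverse[OF inv_s W'] iis by simp
  ultimately show "W \<in> theta sm z G \<phi> s ` (Ig sm z \<phi> (inv\<^bsub>G\<^esub> s) \<inter> Ig sm z \<phi> t)"
    using V1 by (metis IntI image_eqI)
qed

lemma theta_comp:
  assumes s: "s \<in> carrier G" and t: "t \<in> carrier G"
    and V: "V \<in> Ig sm z \<phi> (inv\<^bsub>G\<^esub> t)" "V \<in> Ig sm z \<phi> (inv\<^bsub>G\<^esub> (s \<otimes>\<^bsub>G\<^esub> t))"
  shows "theta sm z G \<phi> s (theta sm z G \<phi> t V) = theta sm z G \<phi> (s \<otimes>\<^bsub>G\<^esub> t) V"
proof -
  have st: "s \<otimes>\<^bsub>G\<^esub> t \<in> carrier G" and ist: "inv\<^bsub>G\<^esub> (s \<otimes>\<^bsub>G\<^esub> t) \<in> carrier G"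
    and cancel: "t \<otimes>\<^bsub>G\<^esub> inv\<^bsub>G\<^esub> (s \<otimes>\<^bsub>G\<^esub> t) = inv\<^bsub>G\<^esub> s"
    using s t by (simp_all add: G.inv_mult_group G.m_assoc[symmetric])
  have "Phi t ` V \<subseteq> tight_dom (inv\<^bsub>G\<^esub> s)"
    using Phi_in_tight_dom_mult[OF t ist] Ig_memD(2)[OF V(1)] Ig_memD(2)[OF V(2)] cancel by auto
  then have tV: "theta sm z G \<phi> t V \<in> Ig sm z \<phi> (inv\<^bsub>G\<^esub> s)"
    using theta_eq[OF t V(1)] Ig_memD(1)[OF Phi_image_Ig[OF t V(1)]] unfolding Ig_eq by simp
  have "theta sm z G \<phi> s (theta sm z G \<phi> t V) = Phi s ` Phi t ` V"
    using theta_eq[OF s tV] theta_eq[OF t V(1)] by simp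
  also have "\<dots> = Phi (s \<otimes>\<^bsub>G\<^esub> t) ` V"
    unfolding image_image using Phi_comp[OF s t] Ig_memD(2)[OF V(1)] Ig_memD(2)[OF V(2)]
    by (intro image_cong) blast+
  also have "\<dots> = theta sm z G \<phi> (s \<otimes>\<^bsub>G\<^esub> t) V"
    using theta_eq[OF st V(2)] by simp
  finally show ?thesis .
qed

lemma partial_action_theta: "partial_action G (Tc E sm) (Ig sm z \<phi>) (theta sm z G \<phi>)"
  unfolding partial_action_def
  by (intro conjI ballI)
    (simp_all add: gba_ideal_Ig gba_iso_theta Ig_one theta_one theta_image_Ig_Int theta_comp)

end

theorem mainTheorem13:
  fixes sm :: "'a \<Rightarrow> 'a \<Rightarrow> 'a" and z :: 'a
    and G :: "('g, 'b) monoid_scheme" and \<phi> :: "'a \<Rightarrow> 'g"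
  assumes "inverse_semigroup_zero sm z"
    and "group G"
    and "pure_grading sm z G \<phi>"
  shows "partial_action G (Tc (idems sm) sm) (Ig sm z \<phi>) (theta sm z G \<phi>)"
proof -
  interpret graded_inverse_semigroup sm z G \<phi>
    by (intro graded_inverse_semigroup.intro inverse_semigroup.intro graded_inverse_semigroup_axioms.intro assms)
  show ?thesis
    by (rule partial_action_theta)
qed

end
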